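(* Let $r\ge1$ and let $\mathrm{LP}_r(t)$ be the real linear program obtained from $\mathrm{LP}_r$ (described in the context) by substituting a real number $t$ for the parameter. Let $\mathcal C_t(\lambda)$ denote the point with parameter $\mu=t^\lambda$ of the primal-dual central path of $\mathrm{LP}_r(t)$ and its dual. Then $$\liminf_{t\to+\infty}\kappa(\mathcal C_t,[0,2])\ \ge\ (2^{r-1}-1)\frac{\pi}{2}.$$ The same bound holds for the primal central path $\lambda\mapsto(x,w)$-component of $\mathcal C_t(\lambda)$. In particular, the total curvatures of the whole primal-dual central path and of the whole primal central path of $\mathrm{LP}_r(t)$ have limit inferior at least $(2^{r-1}-1)\pi/2$ as $t\to+\infty$.
   Context: $\mathrm{LP}_r(t)$ is a linear program with $3r+4$ inequalities in dimension $2r+2$. In equality form, its decision variables are $x=(u_0,v_0,\dots,u_r,v_r)\in\mathbb R^{2r+2}$ and its slack variables are $w=(z_0,h_0,z_1,z'_1,h_1,\dots,z_r,z'_r,h_r)\in\mathbb R^{3r+2}$, all $\ge0$. The problem is: minimize $v_0$ subject to - $u_0+z_0=t$ and $v_0+h_0=t^2$; - for $1\le i\le r$: $u_i+z_i=tu_{i-1}$, $u_i+z'_i=tv_{i-1}$, and $v_i+h_i=t^{1-2^{-i}}(u_{i-1}+v_{i-1})$. Writing this as: minimize $c^Tx$ subject to $Ax+w=b$, $x,w\ge0$, with dual: maximize $-b^Ty$ subject to $-A^Ty+s=c$, $y,s\ge0$. Both are strictly feasible for large $t$. The central path point with parameter $\mu>0$ is the unique solution $(x,w,y,s)$ of $Ax+w=b$,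 $-A^Ty+s=c$, $w_iy_i=x_js_j=\mu$ for all $i,j$, $x,w,y,s>0$. Total curvature: for a polygonal curve, it is the sum of the angles between consecutive segments, where the angle between segments $UV$ and $VW$ is the angle in $[0,\pi]$ between the vectors $V-U$ and $W-V$. For a curve $\sigma:[a,b]\to\mathbb R^p$, $\kappa(\sigma,[a,b])$ is the supremum of the total curvatures of polygonal curves with vertices $\sigma(\tau_0),\dots,\sigma(\tau_N)$, $a\le\tau_0<\dots<\tau_N\le b$. *)

theory Defs
  imports "HOL-Analysis.Analysis"
begin

section \<open>Vectors of R^p as functions nat => real (coordinates 0..p-1)\<close>

definition dotp :: "nat \<Rightarrow> (nat \<Rightarrow> real) \<Rightarrow> (nat \<Rightarrow> real) \<Rightarrow> real" where
  "dotp p u v = (\<Sum>i<p. u i * v i)"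

definition normp :: "nat \<Rightarrow> (nat \<Rightarrow> real) \<Rightarrow> real" where
  "normp p u = sqrt (dotp p u u)"

definition vang :: "nat \<Rightarrow> (nat \<Rightarrow> real) \<Rightarrow> (nat \<Rightarrow> real) \<Rightarrow> real" where
  "vang p u v = (if normp p u = 0 \<or> normp p v = 0 then 0
                 else arccos (dotp p u v / (normp p u * normp p v)))"

definition poly_curv :: "nat \<Rightarrow> (nat \<Rightarrow> nat \<Rightarrow> real) \<Rightarrow> nat \<Rightarrow> real" where
  "poly_curv p P N = (\<Sum>k\<in>{1..<N}. vang p (P k - P (k - 1)) (P (k + 1) - P k))"

definition total_curvature :: "nat \<Rightarrow> (real \<Rightarrow> nat \<Rightarrow> real) \<Rightarrow> real set \<Rightarrow> ereal" where
  "total_curvature p \<sigma> S =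
     (SUP (N, \<tau>) \<in> {(N, \<tau>). strict_mono_on {..N} \<tau> \<and> \<tau> ` {..N} \<subseteq> S}.
        ereal (poly_curv p (\<lambda>k. \<sigma> (\<tau> k)) N))"

text \<open>Primal variables x (index j < 2r+2): u_i = x (2i), v_i = x (2i+1).
  Slack variables / constraint rows (index k < 3r+2): z_0 = w 0, h_0 = w 1, and for 1 <= i <= r:
  z_i = w (3i-1), z'_i = w (3i), h_i = w (3i+1).\<close>

definition nvar :: "nat \<Rightarrow> nat" where "nvar r = 2 * r + 2"
definition ncon :: "nat \<Rightarrow> nat" where "ncon r = 3 * r + 2"

definition LPA :: "real \<Rightarrow> nat \<Rightarrow> nat \<Rightarrow> real" where
  "LPA t k j =
    (if k = 0 then (if j = 0 then 1 else 0)
     else if k = 1 then (if j = 1 then 1 else 0)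
     else (let i = (k + 1) div 3 in
       if (k + 1) mod 3 = 0 then        \<comment> \<open>u_i + z_i = t u_{i-1}\<close>
         (if j = 2 * i then 1 else if j = 2 * (i - 1) then - t else 0)
       else if (k + 1) mod 3 = 1 then   \<comment> \<open>u_i + z'_i = t v_{i-1}\<close>
         (if j = 2 * i then 1 else if j = 2 * (i - 1) + 1 then - t else 0)
       else                             \<comment> \<open>v_i + h_i = t^(1-2^-i) (u_{i-1} + v_{i-1})\<close>
         (if j = 2 * i + 1 then 1
          else if j = 2 * (i - 1) \<or> j = 2 * (i - 1) + 1 then - (t powr (1 - 2 powr (- real i)))
          else 0)))"

definition LPb :: "real \<Rightarrow> nat \<Rightarrow> real" where
  "LPb t k = (if k = 0 then t else if k = 1 then t ^ 2 else 0)"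

text \<open>Objective: minimize v_0.\<close>
definition LPc :: "nat \<Rightarrow> real" where
  "LPc j = (if j = 1 then 1 else 0)"

definition cp_cond :: "nat \<Rightarrow> real \<Rightarrow> real \<Rightarrow>
    (nat \<Rightarrow> real) \<Rightarrow> (nat \<Rightarrow> real) \<Rightarrow> (nat \<Rightarrow> real) \<Rightarrow> (nat \<Rightarrow> real) \<Rightarrow> bool" where
  "cp_cond r t \<mu> x w y s \<longleftrightarrow>
     (\<forall>k<ncon r. (\<Sum>j<nvar r. LPA t k j * x j) + w k = LPb t k) \<and>
     (\<forall>j<nvar r. - (\<Sum>k<ncon r. LPA t k j * y k) + s j = LPc j) \<and>
     (\<forall>k<ncon r. w k * y k = \<mu>) \<and>
     (\<forall>j<nvar r. x j * s j = \<mu>) \<and>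
     (\<forall>j<nvar r. x j > 0 \<and> s j > 0) \<and>
     (\<forall>k<ncon r. w k > 0 \<and> y k > 0) \<and>
     (\<forall>j\<ge>nvar r. x j = 0 \<and> s j = 0) \<and>
     (\<forall>k\<ge>ncon r. w k = 0 \<and> y k = 0)"

definition cp_point :: "nat \<Rightarrow> real \<Rightarrow> real \<Rightarrow>
    (nat \<Rightarrow> real) \<times> (nat \<Rightarrow> real) \<times> (nat \<Rightarrow> real) \<times> (nat \<Rightarrow> real)" where
  "cp_point r t \<mu> = (THE (x, w, y, s). cp_cond r t \<mu> x w y s)"

definition pd_dim :: "nat \<Rightarrow> nat" where "pd_dim r = 2 * nvar r + 2 * ncon r"

definition pd_path :: "nat \<Rightarrow> real \<Rightarrow> real \<Rightarrow> nat \<Rightarrow> real" where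
  "pd_path r t lam = (case cp_point r t (t powr lam) of (x, w, y, s) \<Rightarrow>
     (\<lambda>k. if k < nvar r then x k
          else if k < nvar r + ncon r then w (k - nvar r)
          else if k < 2 * nvar r + ncon r then y (k - (nvar r + ncon r))
          else if k < pd_dim r then s (k - (2 * nvar r + ncon r))
          else 0))"

definition p_dim :: "nat \<Rightarrow> nat" where "p_dim r = nvar r + ncon r"

definition p_path :: "nat \<Rightarrow> real \<Rightarrow> real \<Rightarrow> nat \<Rightarrow> real" where
  "p_path r t lam = (case cp_point r t (t powr lam) of (x, w, y, s) \<Rightarrow>
     (\<lambda>k. if k < nvar r then x k
          else if k < p_dim r then w (k - nvar r)
          else 0))"

end

theory Submission
  imports Defs
begin

text \<open>
  For large \<open>t\<close> the point of the central path at \<open>\<mu> = t^\<lambda>\<close> has, up to factors independent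
  of \<open>t\<close>, the coordinates \<open>u_p ~ t^U_p\<close> and \<open>v_p ~ t^V_p\<close>, where \<open>U_0 = 1\<close>, \<open>V_0 = \<lambda>\<close>,
  \<open>U_(p+1) = 1 + min U_p V_p\<close> and \<open>V_(p+1) = 1 - 2^-(p+1) + max U_p V_p\<close>. The upper bounds come
  from the constraints; the lower bounds come from a greedily built feasible point with the same
  \<open>v_0\<close>, because by complementary slackness every feasible point whose objective value is at most
  \<open>v_0\<close> is dominated coordinatewise by \<open>5r + 4\<close> times the central point.

  The difference \<open>D_p = V_p - U_p\<close> satisfies \<open>D_(p+1) = |D_p| - 2^-(p+1)\<close>, so on a grid of
  \<open>2^(r-1) + 1\<close> values of \<open>\<lambda>\<close> in \<open>[0, 2)\<close> the sign of \<open>D_(r-1)\<close> alternates while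
  \<open>|D_(r-1)| \<ge> 2^-r\<close>. Hence at consecutive grid points the largest coordinate is alternately the
  slack \<open>z'_r\<close> and the slack \<open>z_r\<close>, and it exceeds every other coordinate, as well as every
  coordinate at the previous grid point, by a factor of order \<open>t^(2^-r)\<close>. Each segment of the
  polygon inscribed at the grid is thus almost parallel to one of two coordinate axes, alternately,
  and each of its \<open>2^(r-1) - 1\<close> turning angles tends to \<open>\<pi>/2\<close>.
\<close>

section \<open>The constraint rows of LP_r(t)\<close>

definition lp_exponent :: "nat \<Rightarrow> real" where
  "lp_exponent i = 1 - (1/2) ^ i"

lemma lp_exponent_powr: "1 - 2 powr (- real i) = lp_exponent i"
  by (simp add: lp_exponent_def powr_minus powr_realpow power_divide inverse_eq_divide)

lemma lp_exponent_bounds: "0 \<le> lp_exponent i" "lp_exponent i < 1"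
  by (simp_all add: lp_exponent_def power_le_one)

lemma lp_exponent_ge_half: "i \<ge> 1 \<Longrightarrow> lp_exponent i \<ge> 1/2"
  using power_decreasing[of 1 i "1/2::real"] by (simp add: lp_exponent_def)

lemma LPA_row_z: "LPA t (3*p+2) j = (if j = 2*p+2 then 1 else if j \<in> {2*p} then - t else 0)"
  by (simp add: LPA_def Let_def)

lemma LPA_row_z': "LPA t (3*p+3) j = (if j = 2*p+2 then 1 else if j \<in> {2*p+1} then - t else 0)"
  by (simp add: LPA_def Let_def)

lemma LPA_row_h:
  "LPA t (3*p+4) j =
     (if j = 2*p+3 then 1 else if j \<in> {2*p, 2*p+1} then - (t powr lp_exponent (Suc p)) else 0)"
  by (simp add: LPA_def Let_def lp_exponent_powr[symmetric])

lemma sum_coordinate_combination: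
  fixes x :: "nat \<Rightarrow> real"
  assumes "a < n" "a \<notin> B" "B \<subseteq> {..<n}"
  shows "(\<Sum>j<n. (if j = a then \<alpha> else if j \<in> B then \<beta> else 0) * x j) = \<alpha> * x a + \<beta> * sum x B"
proof -
  have "(\<Sum>j<n. (if j = a then \<alpha> else if j \<in> B then \<beta> else 0) * x j)
      = (\<Sum>j<n. (if j = a then \<alpha> * x a else 0) + \<beta> * (if j \<in> B then x j else 0))"
    by (rule sum.cong) (use assms(2) in auto)
  also have "\<dots> = \<alpha> * x a + \<beta> * sum x ({..<n} \<inter> B)"
    by (simp add: sum.distrib assms(1) sum_distrib_left[symmetric] sum.inter_restrict)
  finally show ?thesis
    using assms(3) by (simp add: Int_absorb1)
qed

lemma lp_row_cases:
  assumes "k < ncon r"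
  obtains "k = 0" | "k = 1"
    | p where "p < r" "k = 3*p+2" | p where "p < r" "k = 3*p+3" | p where "p < r" "k = 3*p+4"
proof -
  define p where "p = (k + 1) div 3 - 1"
  have "k < 2 \<or> k = 3*p+2 \<or> k = 3*p+3 \<or> k = 3*p+4"
    unfolding p_def by presburger
  moreover have "k \<ge> 2 \<Longrightarrow> p < r"
    using assms unfolding p_def ncon_def by presburger
  ultimately show ?thesis
    using that by fastforce
qed

definition lp_feasible :: "nat \<Rightarrow> real \<Rightarrow> (nat \<Rightarrow> real) \<Rightarrow> (nat \<Rightarrow> real) \<Rightarrow> bool" where
  "lp_feasible r t x w \<longleftrightarrow> (\<forall>k<ncon r. (\<Sum>j<nvar r. LPA t k j * x j) + w k = LPb t k)"

lemma lp_row_sums: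
  shows "(\<Sum>j<nvar r. LPA t 0 j * x j) = x 0" "(\<Sum>j<nvar r. LPA t 1 j * x j) = x 1"
    and "p < r \<Longrightarrow> (\<Sum>j<nvar r. LPA t (3*p+2) j * x j) = x (2*p+2) - t * x (2*p)"
    and "p < r \<Longrightarrow> (\<Sum>j<nvar r. LPA t (3*p+3) j * x j) = x (2*p+2) - t * x (2*p+1)"
    and "p < r \<Longrightarrow> (\<Sum>j<nvar r. LPA t (3*p+4) j * x j)
                     = x (2*p+3) - t powr lp_exponent (Suc p) * (x (2*p) + x (2*p+1))"
proof -
  have row: "(\<Sum>j<nvar r. LPA t k j * x j) = \<alpha> * x a + \<beta> * sum x B"
    if "\<And>j. LPA t k j = (if j = a then \<alpha> else if j \<in> B then \<beta> else 0)"
      "a < nvar r" "a \<notin> B" "B \<subseteq> {..<nvar r}" for k a B \<alpha> \<beta>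
    using sum_coordinate_combination[OF that(2-4)] by (simp add: that(1))
  have n: "0 < nvar r" "1 < nvar r" "p < r \<Longrightarrow> 2*p+3 < nvar r"
    by (auto simp: nvar_def)
  have "LPA t 0 j = (if j = 0 then 1 else if j \<in> {} then 0 else 0)"
    "LPA t 1 j = (if j = 1 then 1 else if j \<in> {} then 0 else 0)" for j
    by (simp_all add: LPA_def)
  from row[OF this(1)] row[OF this(2)] n(1,2)
  show "(\<Sum>j<nvar r. LPA t 0 j * x j) = x 0" "(\<Sum>j<nvar r. LPA t 1 j * x j) = x 1"
    by simp_all
  assume "p < r"
  then show "(\<Sum>j<nvar r. LPA t (3*p+2) j * x j) = x (2*p+2) - t * x (2*p)"
    "(\<Sum>j<nvar r. LPA t (3*p+3) j * x j) = x (2*p+2) - t * x (2*p+1)"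
    "(\<Sum>j<nvar r. LPA t (3*p+4) j * x j)
       = x (2*p+3) - t powr lp_exponent (Suc p) * (x (2*p) + x (2*p+1))"
    using row[OF LPA_row_z] row[OF LPA_row_z'] row[OF LPA_row_h] n(3) by (auto simp: algebra_simps)
qed

lemma lp_feasible_iff:
  "lp_feasible r t x w \<longleftrightarrow>
     x 0 + w 0 = t \<and> x 1 + w 1 = t^2 \<and>
     (\<forall>p<r. x (2*p+2) + w (3*p+2) = t * x (2*p) \<and> x (2*p+2) + w (3*p+3) = t * x (2*p+1) \<and>
            x (2*p+3) + w (3*p+4) = t powr lp_exponent (Suc p) * (x (2*p) + x (2*p+1)))"
    (is "_ \<longleftrightarrow> ?rows")
proof
  assume f: "lp_feasible r t x w"
  have row: "(\<Sum>j<nvar r. LPA t k j * x j) + w k = LPb t k" if "k < ncon r" for k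
    using f that unfolding lp_feasible_def by blast
  have "x 0 + w 0 = t" "x 1 + w 1 = t^2"
    using row[of 0] row[of 1] lp_row_sums(1,2)[where r=r and t=t and x=x] by (simp_all add: LPb_def ncon_def)
  moreover have "x (2*p+2) + w (3*p+2) = t * x (2*p) \<and> x (2*p+2) + w (3*p+3) = t * x (2*p+1) \<and>
      x (2*p+3) + w (3*p+4) = t powr lp_exponent (Suc p) * (x (2*p) + x (2*p+1))" if "p < r" for p
    using row[of "3*p+2"] row[of "3*p+3"] row[of "3*p+4"] lp_row_sums(3-5)[OF that, where t=t and x=x] that
    by (simp add: LPb_def ncon_def)
  ultimately show ?rows by blast
next
  assume rows: ?rows
  show "lp_feasible r t x w"
    unfolding lp_feasible_def
  proof (intro allI impI)
    fix k assume "k < ncon r"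
    then show "(\<Sum>j<nvar r. LPA t k j * x j) + w k = LPb t k"
    proof (cases rule: lp_row_cases)
      case (3 p)
      with rows have "x (2*p+2) + w (3*p+2) = t * x (2*p)" by blast
      with 3 show ?thesis using lp_row_sums(3)[OF \<open>p < r\<close>, where t=t and x=x] by (simp add: LPb_def)
    next
      case (4 p)
      with rows have "x (2*p+2) + w (3*p+3) = t * x (2*p+1)" by blast
      with 4 show ?thesis using lp_row_sums(4)[OF \<open>p < r\<close>, where t=t and x=x] by (simp add: LPb_def)
    next
      case (5 p)
      with rows have "x (2*p+3) + w (3*p+4) = t powr lp_exponent (Suc p) * (x (2*p) + x (2*p+1))" by blast
      with 5 show ?thesis using lp_row_sums(5)[OF \<open>p < r\<close>, where t=t and x=x] by (simp add: LPb_def)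
    qed (use rows lp_row_sums(1,2)[where r=r and t=t and x=x] in \<open>auto simp: LPb_def\<close>)
  qed
qed

lemma lp_feasible_row_bounds:
  assumes "lp_feasible r t x w" "\<forall>j<nvar r. x j \<ge> 0" "\<forall>k<ncon r. w k \<ge> 0" "p < r"
  shows "x (2*p+2) \<le> t * x (2*p)" "x (2*p+2) \<le> t * x (2*p+1)"
    "x (2*p+3) \<le> t powr lp_exponent (Suc p) * (x (2*p) + x (2*p+1))"
    "w (3*p+2) \<le> t * x (2*p)" "w (3*p+3) \<le> t * x (2*p+1)"
    "w (3*p+4) \<le> t powr lp_exponent (Suc p) * (x (2*p) + x (2*p+1))"
proof -
  have "x (2*p+2) \<ge> 0" "x (2*p+3) \<ge> 0" "w (3*p+2) \<ge> 0" "w (3*p+3) \<ge> 0" "w (3*p+4) \<ge> 0"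
    using assms(2-4) by (auto simp: nvar_def ncon_def)
  with assms(1,4) show "x (2*p+2) \<le> t * x (2*p)" "x (2*p+2) \<le> t * x (2*p+1)"
    "x (2*p+3) \<le> t powr lp_exponent (Suc p) * (x (2*p) + x (2*p+1))"
    "w (3*p+2) \<le> t * x (2*p)" "w (3*p+3) \<le> t * x (2*p+1)"
    "w (3*p+4) \<le> t powr lp_exponent (Suc p) * (x (2*p) + x (2*p+1))"
    unfolding lp_feasible_iff by force+
qed

section \<open>Duality relations on the central path\<close>

lemma cp_cond_lp_feasible: "cp_cond r t \<mu> x w y s \<Longrightarrow> lp_feasible r t x w"
  unfolding cp_cond_def lp_feasible_def by blast

lemma LPc_objective: "(\<Sum>j<nvar r. LPc j * z j) = z 1"
proof -
  have "(\<Sum>j<nvar r. LPc j * z j) = (\<Sum>j<nvar r. if j = 1 then z 1 else 0)"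
    by (rule sum.cong) (auto simp: LPc_def)
  then show ?thesis by (simp add: nvar_def)
qed

lemma cp_cond_pairing:
  assumes cp: "cp_cond r t \<mu> x w y s" and f: "lp_feasible r t z w'"
  shows "(\<Sum>j<nvar r. z j * s j) + (\<Sum>k<ncon r. w' k * y k) = z 1 + (\<Sum>k<ncon r. LPb t k * y k)"
proof -
  have s: "s j = LPc j + (\<Sum>k<ncon r. LPA t k j * y k)" if "j < nvar r" for j
    using cp that unfolding cp_cond_def by (simp add: algebra_simps)
  have "(\<Sum>j<nvar r. z j * s j)
      = (\<Sum>j<nvar r. LPc j * z j) + (\<Sum>k<ncon r. y k * (\<Sum>j<nvar r. LPA t k j * z j))"
    by (simp add: s algebra_simps sum.distrib sum_distrib_left sum.swap[of _ "{..<nvar r}"])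
  also have "(\<Sum>k<ncon r. y k * (\<Sum>j<nvar r. LPA t k j * z j)) = (\<Sum>k<ncon r. y k * (LPb t k - w' k))"
    by (rule sum.cong) (use f in \<open>auto simp: lp_feasible_def eq_diff_eq\<close>)
  finally show ?thesis
    by (simp add: LPc_objective algebra_simps sum_subtractf sum_distrib_left)
qed

lemma cp_cond_gap:
  assumes cp: "cp_cond r t \<mu> x w y s"
  shows "x 1 + (\<Sum>k<ncon r. LPb t k * y k) = real (p_dim r) * \<mu>"
proof -
  have "(\<Sum>j<nvar r. x j * s j) = nvar r * \<mu>" "(\<Sum>k<ncon r. w k * y k) = ncon r * \<mu>"
    using cp unfolding cp_cond_def by simp_all
  then show ?thesis
    using cp_cond_pairing[OF cp cp_cond_lp_feasible[OF cp]] by (simp add: p_dim_def algebra_simps)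
qed

lemma lp_feasible_le_central:
  assumes cp: "cp_cond r t \<mu> x w y s" and f: "lp_feasible r t z w'"
    and z: "\<forall>j<nvar r. z j \<ge> 0" and w': "\<forall>k<ncon r. w' k \<ge> 0" and obj: "z 1 \<le> x 1"
  shows "\<forall>j<nvar r. z j \<le> real (p_dim r) * x j" "\<forall>k<ncon r. w' k \<le> real (p_dim r) * w k"
proof -
  have pos: "\<forall>j<nvar r. x j > 0 \<and> s j > 0" "\<forall>k<ncon r. w k > 0 \<and> y k > 0"
    using cp unfolding cp_cond_def by auto
  have zs: "(\<Sum>j<nvar r. z j * s j) \<ge> 0" and wy: "(\<Sum>k<ncon r. w' k * y k) \<ge> 0"
    using z w' pos by (auto intro!: sum_nonneg)
  have tot: "(\<Sum>j<nvar r. z j * s j) + (\<Sum>k<ncon r. w' k * y k) \<le> real (p_dim r) * \<mu>"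
    using cp_cond_pairing[OF cp f] cp_cond_gap[OF cp] obj by simp
  have cancel: "a \<le> real (p_dim r) * c" if "a * b \<le> real (p_dim r) * \<mu>" "c * b = \<mu>" "b > 0"
    for a b c :: real
    using that mult_right_le_imp_le[of a b "real (p_dim r) * c"] by (simp add: mult.assoc)
  show "\<forall>j<nvar r. z j \<le> real (p_dim r) * x j"
  proof (intro allI impI)
    fix j assume j: "j < nvar r"
    have "z j * s j \<le> (\<Sum>j<nvar r. z j * s j)"
      by (rule member_le_sum) (use j z pos in auto)
    then show "z j \<le> real (p_dim r) * x j"
      using cancel[of "z j" "s j" "x j"] tot wy cp j pos unfolding cp_cond_def by auto
  qed
  show "\<forall>k<ncon r. w' k \<le> real (p_dim r) * w k"
  proof (intro allI impI)
    fix k assume k: "k < ncon r"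
    have "w' k * y k \<le> (\<Sum>k<ncon r. w' k * y k)"
      by (rule member_le_sum) (use k w' pos in auto)
    then show "w' k \<le> real (p_dim r) * w k"
      using cancel[of "w' k" "y k" "w k"] tot zs cp k pos unfolding cp_cond_def by auto
  qed
qed

lemma complementary_difference_nonpos:
  fixes a a' b b' \<mu> :: real
  assumes "a > 0" "a' > 0" "a * b = \<mu>" "a' * b' = \<mu>" "\<mu> > 0"
  shows "(a - a') * (b - b') \<le> 0" and "(a - a') * (b - b') = 0 \<Longrightarrow> a = a'"
proof -
  have "b = \<mu> / a" "b' = \<mu> / a'"
    using assms by (auto simp: field_simps)
  then have e: "(a - a') * (b - b') = - \<mu> * (a - a')^2 / (a * a')"
    using assms by (simp add: field_simps power2_eq_square)
  show "(a - a') * (b - b') \<le> 0"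
    unfolding e using assms by (simp add: divide_nonpos_pos)
  show "(a - a') * (b - b') = 0 \<Longrightarrow> a = a'"
    unfolding e using assms by simp
qed

lemma cp_cond_orthogonal_differences:
  assumes cp: "cp_cond r t \<mu> x w y s" and cp': "cp_cond r t \<mu> x' w' y' s'"
  shows "(\<Sum>j<nvar r. (x j - x' j) * (s j - s' j)) + (\<Sum>k<ncon r. (w k - w' k) * (y k - y' k)) = 0"
  using cp_cond_pairing[OF cp cp_cond_lp_feasible[OF cp]] cp_cond_pairing[OF cp cp_cond_lp_feasible[OF cp']]
    cp_cond_pairing[OF cp' cp_cond_lp_feasible[OF cp]] cp_cond_pairing[OF cp' cp_cond_lp_feasible[OF cp']]
  by (simp add: algebra_simps sum.distrib sum_subtractf)

lemma cp_cond_unique: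
  assumes cp: "cp_cond r t \<mu> x w y s" and cp': "cp_cond r t \<mu> x' w' y' s'" and \<mu>: "\<mu> > 0"
  shows "x = x' \<and> w = w' \<and> y = y' \<and> s = s'"
proof -
  have px: "\<forall>j<nvar r. x j > 0 \<and> x' j > 0 \<and> x j * s j = \<mu> \<and> x' j * s' j = \<mu>"
   and pw: "\<forall>k<ncon r. w k > 0 \<and> w' k > 0 \<and> w k * y k = \<mu> \<and> w' k * y' k = \<mu>"
    using cp cp' unfolding cp_cond_def by auto
  have tA: "\<forall>j\<in>{..<nvar r}. (x j - x' j) * (s j - s' j) \<le> 0"
   and tB: "\<forall>k\<in>{..<ncon r}. (w k - w' k) * (y k - y' k) \<le> 0"
    using px pw complementary_difference_nonpos(1) \<mu> by blast+
  then have "(\<Sum>j<nvar r. (x j - x' j) * (s j - s' j)) \<le> 0"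
    "(\<Sum>k<ncon r. (w k - w' k) * (y k - y' k)) \<le> 0"
    by (auto intro: sum_nonpos)
  with cp_cond_orthogonal_differences[OF cp cp']
  have "(\<Sum>j<nvar r. - ((x j - x' j) * (s j - s' j))) = 0"
    "(\<Sum>k<ncon r. - ((w k - w' k) * (y k - y' k))) = 0"
    by (simp_all add: sum_negf)
  then have zero: "\<forall>j\<in>{..<nvar r}. (x j - x' j) * (s j - s' j) = 0"
    "\<forall>k\<in>{..<ncon r}. (w k - w' k) * (y k - y' k) = 0"
    using tA tB by (subst (asm) sum_nonneg_eq_0_iff; force)+
  have "x j = x' j \<and> s j = s' j" "w k = w' k \<and> y k = y' k" for j k
  proof -
    show "x j = x' j \<and> s j = s' j"
    proof (cases "j < nvar r")
      case True
      then have "x j = x' j"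
        using complementary_difference_nonpos(2)[of "x j" "x' j" "s j" \<mu> "s' j"] zero px \<mu> by auto
      moreover have "s j = \<mu> / x j" "s' j = \<mu> / x' j"
        using px True by (auto simp: field_simps)
      ultimately show ?thesis by simp
    qed (use cp cp' in \<open>auto simp: cp_cond_def\<close>)
    show "w k = w' k \<and> y k = y' k"
    proof (cases "k < ncon r")
      case True
      then have "w k = w' k"
        using complementary_difference_nonpos(2)[of "w k" "w' k" "y k" \<mu> "y' k"] zero pw \<mu> by auto
      moreover have "y k = \<mu> / w k" "y' k = \<mu> / w' k"
        using pw True by (auto simp: field_simps)
      ultimately show ?thesis by simp
    qed (use cp cp' in \<open>auto simp: cp_cond_def\<close>)
  qed
  then show ?thesis by auto
qed

lemma cp_point_eqI:
  assumes "cp_cond r t \<mu> x w y s" "\<mu> > 0"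
  shows "cp_point r t \<mu> = (x, w, y, s)"
  unfolding cp_point_def
  by (rule the_equality) (use assms cp_cond_unique in auto)

section \<open>Strictly feasible points and boundedness\<close>

definition lp_slack :: "nat \<Rightarrow> real \<Rightarrow> (nat \<Rightarrow> real) \<Rightarrow> nat \<Rightarrow> real" where
  "lp_slack r t x k = LPb t k - (\<Sum>j<nvar r. LPA t k j * x j)"

lemma lp_feasible_slack: "lp_feasible r t x (lp_slack r t x)"
  unfolding lp_feasible_def lp_slack_def by simp

text \<open>A feasible point with \<open>v_0 = \<nu>\<close>: taking \<open>u_(p+1)\<close> and \<open>v_(p+1)\<close> to be half the largest values
  their rows allow keeps every slack positive.\<close>

fun greedy_uv :: "real \<Rightarrow> real \<Rightarrow> nat \<Rightarrow> real \<times> real" where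
  "greedy_uv t \<nu> 0 = (t / 2, \<nu>)"
| "greedy_uv t \<nu> (Suc p) =
    (t * min (fst (greedy_uv t \<nu> p)) (snd (greedy_uv t \<nu> p)) / 2,
     t powr lp_exponent (Suc p) * (fst (greedy_uv t \<nu> p) + snd (greedy_uv t \<nu> p)) / 2)"

definition greedy_x :: "nat \<Rightarrow> real \<Rightarrow> real \<Rightarrow> nat \<Rightarrow> real" where
  "greedy_x r t \<nu> j =
     (if j < nvar r then (if even j then fst else snd) (greedy_uv t \<nu> (j div 2)) else 0)"

lemma greedy_x_uv:
  "p \<le> r \<Longrightarrow> greedy_x r t \<nu> (2*p) = fst (greedy_uv t \<nu> p)"
  "p \<le> r \<Longrightarrow> greedy_x r t \<nu> (2*p+1) = snd (greedy_uv t \<nu> p)"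
  by (simp_all add: greedy_x_def nvar_def)

lemma greedy_uv_pos: "t > 0 \<Longrightarrow> \<nu> > 0 \<Longrightarrow> fst (greedy_uv t \<nu> p) > 0 \<and> snd (greedy_uv t \<nu> p) > 0"
  by (induction p) auto

lemma greedy_x_pos: "t > 0 \<Longrightarrow> \<nu> > 0 \<Longrightarrow> j < nvar r \<Longrightarrow> greedy_x r t \<nu> j > 0"
  using greedy_uv_pos by (auto simp: greedy_x_def)

lemma greedy_slack_values:
  assumes "t > 0" "\<nu> > 0"
  shows "lp_slack r t (greedy_x r t \<nu>) 0 = t / 2" "lp_slack r t (greedy_x r t \<nu>) 1 = t^2 - \<nu>"
    and "p < r \<Longrightarrow> lp_slack r t (greedy_x r t \<nu>) (3*p+2) \<ge> t * fst (greedy_uv t \<nu> p) / 2"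
    and "p < r \<Longrightarrow> lp_slack r t (greedy_x r t \<nu>) (3*p+3) \<ge> t * snd (greedy_uv t \<nu> p) / 2"
    and "p < r \<Longrightarrow> lp_slack r t (greedy_x r t \<nu>) (3*p+4) = snd (greedy_uv t \<nu> (Suc p))"
proof -
  note rows = lp_feasible_slack[of r t "greedy_x r t \<nu>", unfolded lp_feasible_iff]
  show "lp_slack r t (greedy_x r t \<nu>) 0 = t / 2" "lp_slack r t (greedy_x r t \<nu>) 1 = t^2 - \<nu>"
    using rows greedy_x_uv[of 0 r t \<nu>] by auto
  assume p: "p < r"
  define a where "a = fst (greedy_uv t \<nu> p)"
  define b where "b = snd (greedy_uv t \<nu> p)"
  have x: "greedy_x r t \<nu> (2*p) = a" "greedy_x r t \<nu> (2*p+1) = b"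
    "greedy_x r t \<nu> (2*p+2) = t * min a b / 2"
    "greedy_x r t \<nu> (2*p+3) = t powr lp_exponent (Suc p) * (a + b) / 2"
  proof -
    have eq: "2 * Suc p = 2*p+2" "2 * Suc p + 1 = 2*p+3" by simp_all
    show "greedy_x r t \<nu> (2*p) = a" "greedy_x r t \<nu> (2*p+1) = b"
      "greedy_x r t \<nu> (2*p+2) = t * min a b / 2"
      "greedy_x r t \<nu> (2*p+3) = t powr lp_exponent (Suc p) * (a + b) / 2"
      using p greedy_x_uv[of p r t \<nu>] greedy_x_uv(1)[of "Suc p" r t \<nu>, unfolded eq(1)]
        greedy_x_uv(2)[of "Suc p" r t \<nu>, unfolded eq(2)]
      by (simp_all add: a_def b_def)
  qed
  have "t * min a b / 2 + lp_slack r t (greedy_x r t \<nu>) (3*p+2) = t * a"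
    "t * min a b / 2 + lp_slack r t (greedy_x r t \<nu>) (3*p+3) = t * b"
    "t powr lp_exponent (Suc p) * (a + b) / 2 + lp_slack r t (greedy_x r t \<nu>) (3*p+4)
       = t powr lp_exponent (Suc p) * (a + b)"
    using rows[THEN conjunct2, THEN conjunct2, rule_format, OF p] unfolding x by auto
  moreover have "t * min a b \<le> t * a" "t * min a b \<le> t * b"
    using assms by (simp_all add: mult_left_mono)
  ultimately show "lp_slack r t (greedy_x r t \<nu>) (3*p+2) \<ge> t * fst (greedy_uv t \<nu> p) / 2"
    "lp_slack r t (greedy_x r t \<nu>) (3*p+3) \<ge> t * snd (greedy_uv t \<nu> p) / 2"
    "lp_slack r t (greedy_x r t \<nu>) (3*p+4) = snd (greedy_uv t \<nu> (Suc p))"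
    by (simp_all add: a_def b_def)
qed

lemma greedy_slack_pos:
  assumes "t > 0" "\<nu> > 0" "\<nu> < t^2" "k < ncon r"
  shows "lp_slack r t (greedy_x r t \<nu>) k > 0"
proof -
  have "fst (greedy_uv t \<nu> p) > 0" "snd (greedy_uv t \<nu> p) > 0" for p
    using greedy_uv_pos assms(1,2) by blast+
  then have pos: "t * fst (greedy_uv t \<nu> p) / 2 > 0" "t * snd (greedy_uv t \<nu> p) / 2 > 0" for p
    using assms(1) by simp_all
  note slack = greedy_slack_values[OF assms(1,2), where r=r]
  from assms(4) show ?thesis
  proof (cases rule: lp_row_cases)
    case (3 p)
    with less_le_trans[OF pos(1) slack(3)[OF \<open>p < r\<close>]] show ?thesis by simp
  next
    case (4 p)
    with less_le_trans[OF pos(2) slack(4)[OF \<open>p < r\<close>]] show ?thesis by simp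
  next
    case (5 p)
    with slack(5)[OF \<open>p < r\<close>] greedy_uv_pos[OF assms(1,2), of "Suc p"] show ?thesis by simp
  qed (use slack assms in auto)
qed

lemma row_rhs_le_power:
  fixes a b t e :: real
  assumes "0 \<le> a" "0 \<le> b" "a \<le> (2*t)^m" "b \<le> (2*t)^m" "t \<ge> 1" "0 \<le> e" "e \<le> 1"
  shows "t * a \<le> (2*t)^(m+1) \<and> t * b \<le> (2*t)^(m+1) \<and> t powr e * (a + b) \<le> (2*t)^(m+1)"
proof -
  have pow: "(2*t)^(m+1) = 2 * (t * (2*t)^m)"
    by (simp add: mult.assoc)
  have "t powr e \<le> t"
    using powr_mono[of e 1 t] assms by simp
  then have "t powr e * (a + b) \<le> t * (2 * (2*t)^m)"
    using assms by (intro mult_mono) auto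
  moreover have "t * a \<le> t * (2*t)^m" "t * b \<le> t * (2*t)^m"
    using assms by (simp_all add: mult_left_mono)
  moreover have "0 \<le> t * (2*t)^m"
    using assms by simp
  ultimately show ?thesis
    unfolding pow by linarith
qed

lemma lp_feasible_uv_bounded:
  assumes f: "lp_feasible r t x w" and x: "\<forall>j<nvar r. x j \<ge> 0" and w: "\<forall>k<ncon r. w k \<ge> 0"
    and t: "t \<ge> 1"
  shows "p \<le> r \<Longrightarrow> x (2*p) \<le> (2*t)^(p+2) \<and> x (2*p+1) \<le> (2*t)^(p+2)"
proof (induction p)
  case 0
  have "x 0 + w 0 = t" "x 1 + w 1 = t^2"
    using f unfolding lp_feasible_iff by auto
  moreover have "w 0 \<ge> 0" "w 1 \<ge> 0"
    using w by (auto simp: ncon_def)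
  moreover have "t \<le> (2*t)^2" "t^2 \<le> (2*t)^2"
    using t by (auto simp: power2_eq_square)
  ultimately have "x 0 \<le> (2*t)^2" "x 1 \<le> (2*t)^2"
    by linarith+
  then show ?case
    by (simp add: power2_eq_square)
next
  case (Suc p)
  then have p: "p < r" and IH: "x (2*p) \<le> (2*t)^(p+2)" "x (2*p+1) \<le> (2*t)^(p+2)"
    by auto
  have "x (2*p) \<ge> 0" "x (2*p+1) \<ge> 0"
    using x p by (auto simp: nvar_def)
  note rhs = row_rhs_le_power[OF this IH t lp_exponent_bounds(1)[of "Suc p"]
      less_imp_le[OF lp_exponent_bounds(2)[of "Suc p"]]]
  note row = lp_feasible_row_bounds(1-3)[OF f x w p]
  have "x (2*p+2) \<le> (2*t)^(p+2+1)" "x (2*p+3) \<le> (2*t)^(p+2+1)"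
    using order_trans[OF row(1) conjunct1[OF rhs]] order_trans[OF row(3) conjunct2[OF conjunct2[OF rhs]]] .
  moreover have eq: "2 * Suc p = 2*p+2" "2*p+2+1 = 2*p+3" "Suc p + 2 = p+2+1"
    by simp_all
  ultimately show ?case
    unfolding eq by blast
qed

lemma lp_feasible_bounded:
  assumes f: "lp_feasible r t x w" and x: "\<forall>j<nvar r. x j \<ge> 0" and w: "\<forall>k<ncon r. w k \<ge> 0"
    and t: "t \<ge> 1"
  shows "\<forall>j<nvar r. x j \<le> (2*t)^(r+2)" "\<forall>k<ncon r. w k \<le> (2*t)^(r+2)"
proof -
  note uv = lp_feasible_uv_bounded[OF f x w t]
  have mono: "(2*t)^m \<le> (2*t)^n" if "m \<le> n" for m n
    using t that by (intro power_increasing) auto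
  show "\<forall>j<nvar r. x j \<le> (2*t)^(r+2)"
  proof (intro allI impI)
    fix j assume "j < nvar r"
    then have "j div 2 \<le> r" "j = 2 * (j div 2) \<or> j = 2 * (j div 2) + 1"
      by (auto simp: nvar_def)
    then show "x j \<le> (2*t)^(r+2)"
      using uv[of "j div 2"] mono[of "j div 2 + 2" "r + 2"] by auto
  qed
  have "x 0 + w 0 = t" "x 1 + w 1 = t^2" "x 0 \<ge> 0" "x 1 \<ge> 0"
    using f x unfolding lp_feasible_iff by (auto simp: nvar_def)
  moreover have "t \<le> (2*t)^2" "t^2 \<le> (2*t)^2" "(2*t)^2 \<le> (2*t)^(r+2)"
    using t mono[of 2 "r+2"] by (auto simp: power2_eq_square)
  ultimately have w01: "w 0 \<le> (2*t)^(r+2)" "w 1 \<le> (2*t)^(r+2)"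
    by linarith+
  have rhs: "t * x (2*p) \<le> (2*t)^(r+2) \<and> t * x (2*p+1) \<le> (2*t)^(r+2) \<and>
      t powr lp_exponent (Suc p) * (x (2*p) + x (2*p+1)) \<le> (2*t)^(r+2)" if p: "p < r" for p
  proof -
    have "x (2*p) \<ge> 0" "x (2*p+1) \<ge> 0"
      using x p by (auto simp: nvar_def)
    have "p \<le> r"
      using p by simp
    note rhs = row_rhs_le_power[OF \<open>x (2*p) \<ge> 0\<close> \<open>x (2*p+1) \<ge> 0\<close>
        conjunct1[OF uv[OF this]] conjunct2[OF uv[OF this]] t
        lp_exponent_bounds(1)[of "Suc p"] less_imp_le[OF lp_exponent_bounds(2)[of "Suc p"]]]
    have "(2*t)^(p+2+1) \<le> (2*t)^(r+2)"
      using mono[of "p+2+1" "r+2"] p by simp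
    with rhs show ?thesis
      by (meson order_trans)
  qed
  note wrow = lp_feasible_row_bounds(4-6)[OF f x w]
  show "\<forall>k<ncon r. w k \<le> (2*t)^(r+2)"
  proof (intro allI impI)
    fix k assume "k < ncon r"
    then show "w k \<le> (2*t)^(r+2)"
    proof (cases rule: lp_row_cases)
      case (3 p)
      with wrow(1)[of p] rhs[of p] show ?thesis by simp
    next
      case (4 p)
      with wrow(2)[of p] rhs[of p] show ?thesis by simp
    next
      case (5 p)
      with wrow(3)[of p] rhs[of p] show ?thesis by simp
    qed (use w01 in auto)
  qed
qed

section \<open>Existence of the central path\<close>

definition strictly_feasible :: "nat \<Rightarrow> real \<Rightarrow> (nat \<Rightarrow> real) \<Rightarrow> bool" where
  "strictly_feasible r t x \<longleftrightarrow>
     (\<forall>j<nvar r. x j > 0) \<and> (\<forall>k<ncon r. lp_slack r t x k > 0) \<and> (\<forall>j\<ge>nvar r. x j = 0)"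

definition barrier :: "nat \<Rightarrow> real \<Rightarrow> real \<Rightarrow> (nat \<Rightarrow> real) \<Rightarrow> real" where
  "barrier r t \<mu> x = x 1 / \<mu> - (\<Sum>j<nvar r. ln (x j)) - (\<Sum>k<ncon r. ln (lp_slack r t x k))"

lemma greedy_strictly_feasible:
  assumes "t > 0" "\<nu> > 0" "\<nu> < t^2"
  shows "strictly_feasible r t (greedy_x r t \<nu>)"
  using greedy_x_pos[OF assms(1,2)] greedy_slack_pos[OF assms]
  unfolding strictly_feasible_def by (simp add: greedy_x_def)

lemma lp_slack_update:
  assumes "j < nvar r"
  shows "lp_slack r t (x(j := x j + h)) k = lp_slack r t x k - h * LPA t k j"
proof -
  have "(\<Sum>i<nvar r. LPA t k i * (x(j := x j + h)) i)
      = (\<Sum>i<nvar r. LPA t k i * x i + (if i = j then LPA t k j * h else 0))"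
    by (rule sum.cong) (auto simp: algebra_simps)
  then show ?thesis
    using assms by (simp add: lp_slack_def sum.distrib algebra_simps)
qed

lemma barrier_sublevel_margin:
  assumes t: "t \<ge> 1" and \<mu>: "\<mu> > 0" and x: "strictly_feasible r t x" and le: "barrier r t \<mu> x \<le> \<Phi>"
  defines "\<delta> \<equiv> exp (- \<Phi> - real (p_dim r) * ln ((2*t)^(r+2)))"
  shows "\<forall>j<nvar r. \<delta> \<le> x j" "\<forall>k<ncon r. \<delta> \<le> lp_slack r t x k"
proof -
  define R where "R = (2*t)^(r+2)"
  have \<delta>: "\<delta> > 0"
    unfolding \<delta>_def by simp
  have xp: "\<forall>j<nvar r. x j > 0" and wp: "\<forall>k<ncon r. lp_slack r t x k > 0"
    using x unfolding strictly_feasible_def by auto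
  have ub: "\<forall>j<nvar r. x j \<le> R" "\<forall>k<ncon r. lp_slack r t x k \<le> R"
    using lp_feasible_bounded[OF lp_feasible_slack _ _ t] xp wp unfolding R_def
    by (auto simp: less_imp_le)
  have "1 \<le> R"
    using t unfolding R_def by (intro one_le_power) simp
  then have R: "0 < R" "ln R \<ge> 0"
    by simp_all
  \<comment> \<open>every summand of T is nonnegative, so each one is bounded by the whole sum\<close>
  define T where "T = (\<Sum>j<nvar r. ln R - ln (x j)) + (\<Sum>k<ncon r. ln R - ln (lp_slack r t x k))"
  have tx: "\<forall>j<nvar r. ln R - ln (x j) \<ge> 0" and tw: "\<forall>k<ncon r. ln R - ln (lp_slack r t x k) \<ge> 0"
    using ub xp wp R(1) by (auto simp: ln_le_cancel_iff)
  then have sx: "(\<Sum>j<nvar r. ln R - ln (x j)) \<ge> 0" and sw: "(\<Sum>k<ncon r. ln R - ln (lp_slack r t x k)) \<ge> 0"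
    by (auto intro: sum_nonneg)
  have "x 1 / \<mu> \<ge> 0"
    using xp \<mu> by (simp add: nvar_def less_imp_le)
  moreover have "T = real (p_dim r) * ln R + barrier r t \<mu> x - x 1 / \<mu>"
    unfolding T_def barrier_def p_dim_def by (simp add: sum_subtractf algebra_simps)
  ultimately have key: "ln \<delta> \<le> ln R - T"
    using le R(2) unfolding \<delta>_def R_def by simp
  show "\<forall>j<nvar r. \<delta> \<le> x j"
  proof (intro allI impI)
    fix j assume j: "j < nvar r"
    have "ln R - ln (x j) \<le> (\<Sum>j<nvar r. ln R - ln (x j))"
      by (rule member_le_sum) (use j tx in auto)
    then have "ln \<delta> \<le> ln (x j)"
      using key sw unfolding T_def by linarith
    then show "\<delta> \<le> x j"
      using xp j \<delta> by (simp add: ln_le_cancel_iff)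
  qed
  show "\<forall>k<ncon r. \<delta> \<le> lp_slack r t x k"
  proof (intro allI impI)
    fix k assume k: "k < ncon r"
    have "ln R - ln (lp_slack r t x k) \<le> (\<Sum>k<ncon r. ln R - ln (lp_slack r t x k))"
      by (rule member_le_sum) (use k tw in auto)
    then have "ln \<delta> \<le> ln (lp_slack r t x k)"
      using key sx unfolding T_def by linarith
    then show "\<delta> \<le> lp_slack r t x k"
      using wp k \<delta> by (simp add: ln_le_cancel_iff)
  qed
qed

lemma continuous_on_coordinate [continuous_intros]: "continuous_on S (\<lambda>x::nat \<Rightarrow> real. x i)"
  by (rule continuous_on_subset[OF continuous_on_product_coordinates]) simp

lemma continuous_on_lp_slack [continuous_intros]: "continuous_on S (\<lambda>x. lp_slack r t x k)"
  unfolding lp_slack_def by (intro continuous_intros)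

lemma compact_box: "compact (PiE UNIV (\<lambda>j. if j < n then {0..R} else {0::real}))"
proof -
  have "compactin (product_topology (\<lambda>i. euclidean) UNIV)
      (PiE UNIV (\<lambda>j. if j < n then {0..R} else {0::real}))"
    unfolding compactin_PiE by auto
  then show ?thesis
    unfolding euclidean_product_topology by simp
qed

lemma barrier_minimiser_exists:
  assumes t: "t \<ge> 2" and \<mu>: "\<mu> > 0"
  obtains xs \<delta> where "strictly_feasible r t xs" "\<delta> > 0"
    "\<forall>j<nvar r. \<delta> \<le> xs j" "\<forall>k<ncon r. \<delta> \<le> lp_slack r t xs k"
    "\<And>x. strictly_feasible r t x \<Longrightarrow> barrier r t \<mu> xs \<le> barrier r t \<mu> x"
proof -
  define R where "R = (2*t)^(r+2)"
  have t1: "t \<ge> 1" using t by simp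
  have "(1::real) < 2 * 2" by simp
  also have "2 * 2 \<le> t^2" using mult_mono[OF t t] t by (simp add: power2_eq_square)
  finally have xb: "strictly_feasible r t (greedy_x r t 1)"
    using t by (intro greedy_strictly_feasible) auto
  define \<Phi> where "\<Phi> = barrier r t \<mu> (greedy_x r t 1)"
  define \<delta> where "\<delta> = exp (- \<Phi> - real (p_dim r) * ln R)"
  have \<delta>: "\<delta> > 0" unfolding \<delta>_def by simp
  define K where "K = {x. (\<forall>j<nvar r. \<delta> \<le> x j \<and> x j \<le> R) \<and> (\<forall>j\<ge>nvar r. x j = 0) \<and>
                          (\<forall>k<ncon r. \<delta> \<le> lp_slack r t x k)}"
  have sublevel: "x \<in> K" if "strictly_feasible r t x" "barrier r t \<mu> x \<le> \<Phi>" for x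
    using barrier_sublevel_margin[OF t1 \<mu> that] that(1)
      lp_feasible_bounded[OF lp_feasible_slack _ _ t1, of r x]
    unfolding K_def strictly_feasible_def \<delta>_def R_def by (auto simp: less_imp_le)
  have K_feasible: "strictly_feasible r t x" if "x \<in> K" for x
    using that \<delta> unfolding K_def strictly_feasible_def by force
  have "K = PiE UNIV (\<lambda>j. if j < nvar r then {0..R} else {0}) \<inter>
      ((\<Inter>j\<in>{..<nvar r}. {x. \<delta> \<le> x j}) \<inter> (\<Inter>k\<in>{..<ncon r}. {x. \<delta> \<le> lp_slack r t x k}))"
    unfolding K_def using \<delta> by (auto simp: PiE_iff split: if_splits)
  then have "compact K"
    by (auto intro!: compact_box closed_INT closed_Collect_le continuous_intros)
  moreover have "greedy_x r t 1 \<in> K"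
    using sublevel[OF xb] unfolding \<Phi>_def by simp
  moreover have "continuous_on K (barrier r t \<mu>)"
    using K_feasible \<mu> unfolding barrier_def strictly_feasible_def
    by (intro continuous_intros) force+
  ultimately obtain xs where xs: "xs \<in> K" "\<forall>x\<in>K. barrier r t \<mu> xs \<le> barrier r t \<mu> x"
    using continuous_attains_inf by blast
  show thesis
  proof (rule that[OF K_feasible[OF xs(1)] \<delta>])
    show "\<forall>j<nvar r. \<delta> \<le> xs j" "\<forall>k<ncon r. \<delta> \<le> lp_slack r t xs k"
      using xs(1) unfolding K_def by auto
    show "barrier r t \<mu> xs \<le> barrier r t \<mu> x" if "strictly_feasible r t x" for x
    proof (cases "barrier r t \<mu> x \<le> \<Phi>")
      case True
      then show ?thesis using xs(2) sublevel[OF that] by blast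
    next
      case False
      then show ?thesis using xs(2) \<open>greedy_x r t 1 \<in> K\<close> unfolding \<Phi>_def by force
    qed
  qed
qed

lemma strictly_feasible_update:
  assumes xs: "strictly_feasible r t xs"
    and margin: "\<forall>j<nvar r. \<delta> \<le> xs j" "\<forall>k<ncon r. \<delta> \<le> lp_slack r t xs k"
    and j: "j < nvar r" and h: "\<bar>h\<bar> * (1 + (\<Sum>k<ncon r. \<bar>LPA t k j\<bar>)) < \<delta>"
  shows "strictly_feasible r t (xs(j := xs j + h))"
proof -
  have "\<bar>h\<bar> * 1 \<le> \<bar>h\<bar> * (1 + (\<Sum>k<ncon r. \<bar>LPA t k j\<bar>))"
    by (intro mult_left_mono) (auto simp: sum_nonneg)
  then have "\<bar>h\<bar> < \<delta>"
    using h by linarith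
  moreover have "\<bar>h * LPA t k j\<bar> < \<delta>" if "k < ncon r" for k
  proof -
    have "\<bar>LPA t k j\<bar> \<le> 1 + (\<Sum>k<ncon r. \<bar>LPA t k j\<bar>)"
      using member_le_sum[of k "{..<ncon r}" "\<lambda>k. \<bar>LPA t k j\<bar>"] that by simp
    then have "\<bar>h * LPA t k j\<bar> \<le> \<bar>h\<bar> * (1 + (\<Sum>k<ncon r. \<bar>LPA t k j\<bar>))"
      by (simp add: abs_mult mult_left_mono)
    then show ?thesis
      using h by linarith
  qed
  ultimately show ?thesis
    using xs margin j unfolding strictly_feasible_def lp_slack_update[OF j]
    by (force simp: abs_less_iff)
qed

lemma barrier_minimiser_stationary:
  assumes xs: "strictly_feasible r t xs" and \<delta>: "\<delta> > 0"
    and margin: "\<forall>j<nvar r. \<delta> \<le> xs j" "\<forall>k<ncon r. \<delta> \<le> lp_slack r t xs k"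
    and min: "\<And>x. strictly_feasible r t x \<Longrightarrow> barrier r t \<mu> xs \<le> barrier r t \<mu> x"
    and j: "j < nvar r"
  shows "LPc j / \<mu> - 1 / xs j + (\<Sum>k<ncon r. LPA t k j / lp_slack r t xs k) = 0"
proof -
  have pos: "\<forall>i<nvar r. xs i > 0" "\<forall>k<ncon r. lp_slack r t xs k > 0"
    using xs unfolding strictly_feasible_def by auto
  define g where "g h = (xs 1 + (if j = 1 then h else 0)) / \<mu>
      - (\<Sum>i<nvar r. ln (xs i + (if i = j then h else 0)))
      - (\<Sum>k<ncon r. ln (lp_slack r t xs k - h * LPA t k j))" for h
  have g: "g h = barrier r t \<mu> (xs(j := xs j + h))" for h
  proof -
    have "(\<Sum>i<nvar r. ln ((xs(j := xs j + h)) i)) = (\<Sum>i<nvar r. ln (xs i + (if i = j then h else 0)))"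
      by (rule sum.cong) auto
    then show ?thesis
      unfolding g_def barrier_def lp_slack_update[OF j] by auto
  qed
  define A where "A = 1 + (\<Sum>k<ncon r. \<bar>LPA t k j\<bar>)"
  have A: "A \<ge> 1"
    unfolding A_def by (simp add: sum_nonneg)
  have "g 0 \<le> g h" if "\<bar>0 - h\<bar> < \<delta> / A" for h
  proof -
    have "\<bar>h\<bar> * A < \<delta>"
      using that A by (simp add: pos_less_divide_eq)
    then have "strictly_feasible r t (xs(j := xs j + h))"
      unfolding A_def by (rule strictly_feasible_update[OF xs margin j])
    then show ?thesis
      using min[of "xs(j := xs j + h)"] g by simp
  qed
  moreover have "(g has_real_derivative (if j = 1 then 1 else 0) / \<mu>
      - (\<Sum>i<nvar r. (if i = j then 1 else 0) / xs i)
      - (\<Sum>k<ncon r. (- LPA t k j) / lp_slack r t xs k)) (at 0)"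
  proof -
    have "((\<lambda>h. xs 1 + (if j = 1 then h else 0)) has_real_derivative (if j = 1 then 1 else 0)) (at 0)"
      by (cases "j = 1") (auto intro!: derivative_eq_intros)
    moreover have "((\<lambda>h. ln (xs i + (if i = j then h else 0))) has_real_derivative
        (if i = j then 1 else 0) / xs i) (at 0)" if "i \<in> {..<nvar r}" for i
      using pos(1) that by (cases "i = j") (auto intro!: derivative_eq_intros)
    moreover have "((\<lambda>h. ln (lp_slack r t xs k - h * LPA t k j)) has_real_derivative
        (- LPA t k j) / lp_slack r t xs k) (at 0)" if "k \<in> {..<ncon r}" for k
      using pos(2) that by (auto intro!: derivative_eq_intros)
    ultimately show ?thesis
      unfolding g_def by (intro DERIV_diff DERIV_cdivide DERIV_sum)
  qed
  ultimately have "(if j = 1 then 1 else 0) / \<mu> - (\<Sum>i<nvar r. (if i = j then 1 else 0) / xs i)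
      - (\<Sum>k<ncon r. (- LPA t k j) / lp_slack r t xs k) = 0"
    using DERIV_local_min[of g _ 0 "\<delta> / A"] \<delta> A by force
  moreover have "(\<Sum>i<nvar r. (if i = j then 1 else 0) / xs i) = 1 / xs j"
    using j by (simp add: if_distrib[of "\<lambda>c. c / _"] cong: if_cong)
  ultimately show ?thesis
    by (simp add: LPc_def sum_negf)
qed

text \<open>The central point is the barrier minimiser together with \<open>w = b - A x\<close>, \<open>y = \<mu>/w\<close> and
  \<open>s = \<mu>/x\<close>: the dual equations are its stationarity conditions.\<close>

lemma cp_cond_exists:
  assumes t: "t \<ge> 2" and \<mu>: "\<mu> > 0"
  shows "\<exists>x w y s. cp_cond r t \<mu> x w y s"
proof -
  obtain xs \<delta> where xs: "strictly_feasible r t xs" "\<delta> > 0"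
      "\<forall>j<nvar r. \<delta> \<le> xs j" "\<forall>k<ncon r. \<delta> \<le> lp_slack r t xs k"
    and min: "\<And>x. strictly_feasible r t x \<Longrightarrow> barrier r t \<mu> xs \<le> barrier r t \<mu> x"
    using barrier_minimiser_exists[OF t \<mu>] by blast
  note stationary = barrier_minimiser_stationary[OF xs min]
  have pos: "\<forall>j<nvar r. xs j > 0" "\<forall>k<ncon r. lp_slack r t xs k > 0" "\<forall>j\<ge>nvar r. xs j = 0"
    using xs(1) unfolding strictly_feasible_def by auto
  define w where "w k = (if k < ncon r then lp_slack r t xs k else 0)" for k
  define y where "y k = (if k < ncon r then \<mu> / lp_slack r t xs k else 0)" for k
  define s where "s j = (if j < nvar r then \<mu> / xs j else 0)" for j
  have "(\<Sum>k<ncon r. LPA t k j * y k) = \<mu> * (\<Sum>k<ncon r. LPA t k j / lp_slack r t xs k)" for j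
    unfolding y_def by (simp add: sum_distrib_left mult.commute)
  then have "cp_cond r t \<mu> xs w y s"
    using pos \<mu> stationary
    unfolding cp_cond_def w_def y_def s_def lp_slack_def by (auto simp: field_simps)
  then show ?thesis by blast
qed

lemma cp_point_cond:
  assumes "t \<ge> 2" "\<mu> > 0"
  obtains x w y s where "cp_point r t \<mu> = (x, w, y, s)" "cp_cond r t \<mu> x w y s"
  using cp_cond_exists[OF assms, of r] cp_point_eqI assms(2) by blast

section \<open>The tropical central path\<close>

text \<open>\<open>trop_u p \<lambda>\<close> and \<open>trop_v p \<lambda>\<close> are the exponents \<open>U_p\<close>, \<open>V_p\<close> of \<open>t\<close> in \<open>u_p\<close> and \<open>v_p\<close> on
  the central path at \<open>\<mu> = t^\<lambda>\<close>, as read off from the constraints of block \<open>p\<close>.\<close>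

fun trop_uv :: "nat \<Rightarrow> real \<Rightarrow> real \<times> real" where
  "trop_uv 0 l = (1, l)"
| "trop_uv (Suc p) l =
    (1 + min (fst (trop_uv p l)) (snd (trop_uv p l)),
     lp_exponent (Suc p) + max (fst (trop_uv p l)) (snd (trop_uv p l)))"

definition trop_u :: "nat \<Rightarrow> real \<Rightarrow> real" where "trop_u p l = fst (trop_uv p l)"
definition trop_v :: "nat \<Rightarrow> real \<Rightarrow> real" where "trop_v p l = snd (trop_uv p l)"
definition trop_max :: "nat \<Rightarrow> real \<Rightarrow> real" where "trop_max p l = max (trop_u p l) (trop_v p l)"

lemma trop_simps:
  "trop_u 0 l = 1" "trop_v 0 l = l"
  "trop_u (Suc p) l = 1 + min (trop_u p l) (trop_v p l)"
  "trop_v (Suc p) l = lp_exponent (Suc p) + trop_max p l"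
  by (simp_all add: trop_u_def trop_v_def trop_max_def)

fun trop_diff :: "nat \<Rightarrow> real \<Rightarrow> real" where
  "trop_diff 0 l = l - 1"
| "trop_diff (Suc p) l = \<bar>trop_diff p l\<bar> - (1/2) ^ Suc p"

lemma trop_v_minus_u: "trop_v p l - trop_u p l = trop_diff p l"
proof (induction p)
  case (Suc p)
  have "max (trop_u p l) (trop_v p l) - min (trop_u p l) (trop_v p l) = \<bar>trop_diff p l\<bar>"
    using Suc by (auto simp: max_def min_def)
  then show ?case
    by (simp add: trop_simps trop_max_def lp_exponent_def)
qed (simp add: trop_simps)

lemma trop_diff_lipschitz: "\<bar>trop_diff p l - trop_diff p l'\<bar> \<le> \<bar>l - l'\<bar>"
proof (induction p)
  case (Suc p)
  then show ?case
    using abs_triangle_ineq3[of "trop_diff p l" "trop_diff p l'"] by simp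
qed simp

text \<open>In the induction step each new odd dyadic point lies halfway between two neighbours at which
  \<open>trop_diff\<close> takes opposite values, so the Lipschitz bound forces it to be a zero.\<close>

lemma trop_diff_dyadic:
  "j \<le> 2 ^ Suc q \<Longrightarrow> trop_diff (Suc q) (real j / 2 ^ q) = (-1) ^ j * (1/2) ^ Suc q"
proof (induction q arbitrary: j)
  case 0
  then have "j = 0 \<or> j = 1 \<or> j = 2" by auto
  then show ?case by auto
next
  case (Suc q)
  define c where "c = (1/2::real) ^ Suc q"
  have c: "c > 0" unfolding c_def by simp
  show ?case
  proof (cases "even j")
    case True
    then obtain i where j: "j = 2 * i" by auto
    have "trop_diff (Suc q) (real i / 2 ^ q) = (-1) ^ i * c"
      using Suc j unfolding c_def by simp
    then have "\<bar>trop_diff (Suc q) (real i / 2 ^ q)\<bar> = c"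
      using c by (simp add: abs_mult)
    moreover have "real j / 2 ^ Suc q = real i / 2 ^ q"
      unfolding j by (simp add: field_simps)
    ultimately show ?thesis
      using j unfolding c_def by (simp add: power_mult)
  next
    case False
    then obtain i where j: "j = 2 * i + 1" using oddE by blast
    define m where "m = real j / 2 ^ Suc q"
    have "trop_diff (Suc q) (real i / 2 ^ q) = (-1) ^ i * c"
      unfolding c_def by (rule Suc.IH) (use Suc.prems j in simp)
    moreover have "trop_diff (Suc q) (real (i + 1) / 2 ^ q) = (-1) ^ (i + 1) * c"
      unfolding c_def by (rule Suc.IH) (use Suc.prems j in simp)
    moreover have "\<bar>m - real i / 2 ^ q\<bar> = c" "\<bar>m - real (i + 1) / 2 ^ q\<bar> = c"
      unfolding m_def c_def j by (simp_all add: field_simps power_divide)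
    ultimately have "trop_diff (Suc q) m = 0"
      using trop_diff_lipschitz[of "Suc q" m "real i / 2 ^ q"]
        trop_diff_lipschitz[of "Suc q" m "real (i + 1) / 2 ^ q"]
      by (cases "even i") (auto simp del: trop_diff.simps simp: abs_le_iff)
    then show ?thesis
      using j unfolding m_def by simp
  qed
qed

lemma trop_mono: "l \<le> l' \<Longrightarrow> trop_u p l \<le> trop_u p l' \<and> trop_v p l \<le> trop_v p l'"
  by (induction p) (auto simp: trop_simps trop_max_def intro: min.mono max.mono)

lemma trop_max_growth: "p \<le> q \<Longrightarrow> trop_max p l + real (q - p) / 2 \<le> trop_max q l"
proof (induction q)
  case (Suc q)
  show ?case
  proof (cases "p = Suc q")
    case False
    then have "p \<le> q" "real (Suc q - p) = real (q - p) + 1"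
      using Suc.prems by auto
    moreover have "trop_max q l + 1/2 \<le> trop_max (Suc q) l"
      using lp_exponent_ge_half[of "Suc q"] by (simp add: trop_max_def[of "Suc q"] trop_simps)
    ultimately show ?thesis
      using Suc.IH by linarith
  qed simp
qed simp

lemma trop_nonneg: "l \<ge> 0 \<Longrightarrow> trop_u p l \<ge> 0 \<and> trop_v p l \<ge> 0"
  using lp_exponent_bounds(1)
  by (induction p) (auto simp: trop_simps trop_max_def le_max_iff_disj)

section \<open>Dominant and bulk exponents\<close>

text \<open>For \<open>r \<ge> 2\<close> the slacks \<open>z_r\<close> and \<open>z'_r\<close> have exponents \<open>1 + trop_u (r-1)\<close> and
  \<open>1 + trop_v (r-1)\<close>; the larger one is \<open>top_exp\<close>. All other coordinates of the primal-dual
  point have exponent at most \<open>bulk_exp\<close>.\<close>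

definition top_exp :: "nat \<Rightarrow> real \<Rightarrow> real" where
  "top_exp r l = 1 + trop_max (r - 1) l"

definition dominance_gap :: "nat \<Rightarrow> real" where
  "dominance_gap r = (1/2) ^ r"

definition bulk_exp :: "nat \<Rightarrow> real \<Rightarrow> real" where
  "bulk_exp r l = max (top_exp r l - dominance_gap r) (1 + min (trop_u (r - 1) l) (trop_v (r - 1) l))"

lemma dominance_gap_pos: "dominance_gap r > 0"
  by (simp add: dominance_gap_def)

lemma bulk_exp_le_top_exp: "bulk_exp r l \<le> top_exp r l"
  using dominance_gap_pos[of r] by (auto simp: bulk_exp_def top_exp_def trop_max_def)

lemma exponents_le_bulk_exp:
  assumes r: "r \<ge> 2"
  shows "p \<le> r \<Longrightarrow> trop_u p l \<le> bulk_exp r l" "p \<le> r \<Longrightarrow> trop_v p l \<le> bulk_exp r l"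
    and "p < r - 1 \<Longrightarrow> 1 + trop_max p l \<le> bulk_exp r l" and "2 \<le> bulk_exp r l"
proof -
  obtain q where q: "r = Suc (Suc q)"
    using r by (metis add_2_eq_Suc le_Suc_ex)
  have gap: "dominance_gap r \<le> 1/2"
    using power_decreasing[of 1 r "1/2::real"] r by (simp add: dominance_gap_def)
  have E: "top_exp r l - dominance_gap r \<le> bulk_exp r l"
    by (simp add: bulk_exp_def)
  have below: "trop_max p l + real (r - 1 - p) / 2 \<le> top_exp r l - 1" if "p \<le> r - 1" for p
    using trop_max_growth[OF that] by (simp add: top_exp_def)
  have "1 \<le> trop_max 0 l" "1 \<le> real (r - 1 - 0)"
    using r by (simp_all add: trop_max_def trop_simps)
  then show "2 \<le> bulk_exp r l"
    using below[of 0] E gap by linarith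
  show "1 + trop_max p l \<le> bulk_exp r l" if "p < r - 1"
  proof -
    have "1 \<le> real (r - 1 - p)"
      using that by linarith
    then show ?thesis
      using below[of p] that E gap by linarith
  qed
  have "trop_u p l \<le> bulk_exp r l \<and> trop_v p l \<le> bulk_exp r l" if "p \<le> r" for p
  proof (cases "p = r")
    case True
    have "trop_v r l = lp_exponent r + trop_max (r - 1) l"
      using q by (simp add: trop_simps)
    then have "trop_v r l = top_exp r l - dominance_gap r"
      by (simp add: lp_exponent_def top_exp_def dominance_gap_def)
    moreover have "trop_u r l = 1 + min (trop_u (r - 1) l) (trop_v (r - 1) l)"
      using q by (simp add: trop_simps)
    ultimately show ?thesis
      using True by (simp add: bulk_exp_def)
  next
    case False
    then have "p \<le> r - 1" "0 \<le> real (r - 1 - p)"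
      using that by simp_all
    then have "trop_max p l \<le> top_exp r l - 1"
      using below[of p] by linarith
    then show ?thesis
      using E gap by (simp add: trop_max_def)
  qed
  then show "p \<le> r \<Longrightarrow> trop_u p l \<le> bulk_exp r l" "p \<le> r \<Longrightarrow> trop_v p l \<le> bulk_exp r l"
    by simp_all
qed

section \<open>Bounds on the central path in terms of the tropical exponents\<close>

lemma powr_min_max:
  assumes "(t::real) \<ge> 1"
  shows "t powr min a b = min (t powr a) (t powr b)" "t powr max a b = max (t powr a) (t powr b)"
proof -
  have "mono (\<lambda>a. t powr a)"
    using assms by (auto intro: monoI powr_mono)
  then show "t powr min a b = min (t powr a) (t powr b)" "t powr max a b = max (t powr a) (t powr b)"
    by (simp_all add: min_of_mono max_of_mono)
qed

lemma powr_mult_sum_le: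
  fixes t K X Y :: real
  assumes "X \<le> K * t powr U" "Y \<le> K * t powr V" "K \<ge> 0" "t \<ge> 1"
  shows "t powr a * (X + Y) \<le> 2 * K * t powr (a + max U V)"
proof -
  have "K * t powr U \<le> K * max (t powr U) (t powr V)" "K * t powr V \<le> K * max (t powr U) (t powr V)"
    using assms(3) by (simp_all add: mult_left_mono)
  then have "X + Y \<le> 2 * (K * max (t powr U) (t powr V))"
    using assms(1,2) by linarith
  then have "t powr a * (X + Y) \<le> t powr a * (2 * (K * max (t powr U) (t powr V)))"
    by (intro mult_left_mono) auto
  then show ?thesis
    using assms(4) by (simp add: powr_add powr_min_max)
qed

lemma p_dim_ge_4: "real (p_dim r) \<ge> 4"
  by (simp add: p_dim_def nvar_def ncon_def)

lemma LPA_column_v0_nonpos: "k \<noteq> 1 \<Longrightarrow> t \<ge> 0 \<Longrightarrow> LPA t k 1 \<le> 0"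
  by (auto simp: LPA_def Let_def)

definition ub_const :: "nat \<Rightarrow> nat \<Rightarrow> real" where
  "ub_const r p = real (p_dim r) * 2 ^ p"

definition lb_const :: "nat \<Rightarrow> real" where
  "lb_const p = 3 * 2 ^ p"

definition path_const :: "nat \<Rightarrow> real" where
  "path_const r = real (p_dim r) * 2 ^ r * lb_const r"

lemma lb_const_ge: "lb_const p \<ge> 3" "p \<le> q \<Longrightarrow> lb_const p \<le> lb_const q"
  using one_le_power[of "2::real" p] by (simp_all add: lb_const_def)

lemma path_const_ge:
  shows "real (p_dim r) * lb_const r \<le> path_const r" and "p \<le> r \<Longrightarrow> ub_const r p \<le> path_const r"
    and "1 \<le> path_const r"
proof -
  have n: "real (p_dim r) \<ge> 4" "lb_const r \<ge> 3"
    using p_dim_ge_4[of r] lb_const_ge(1)[of r] by simp_all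
  show "real (p_dim r) * lb_const r \<le> path_const r"
    using n mult_left_mono[of 1 "2 ^ r" "real (p_dim r) * lb_const r"]
    by (simp add: path_const_def mult_ac)
  then show "1 \<le> path_const r"
    using n mult_mono[of 1 "real (p_dim r)" 1 "lb_const r"] by simp
  show "ub_const r p \<le> path_const r" if "p \<le> r"
  proof -
    have "(2::real) ^ p \<le> 2 ^ r"
      by (rule power_increasing) (use that in auto)
    also have "\<dots> \<le> 2 ^ r * lb_const r"
      using mult_left_mono[of 1 "lb_const r" "2 ^ r"] n(2) by simp
    finally show ?thesis
      using mult_left_mono[of "2 ^ p" "2 ^ r * lb_const r" "real (p_dim r)"]
      by (simp add: ub_const_def path_const_def mult.assoc)
  qed
qed

lemma greedy_uv_lower:
  assumes t: "t \<ge> 2" and \<nu>: "t powr l \<le> 3 * \<nu>"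
  shows "t powr trop_u p l \<le> lb_const p * fst (greedy_uv t \<nu> p) \<and>
         t powr trop_v p l \<le> lb_const p * snd (greedy_uv t \<nu> p)"
proof (induction p)
  case 0
  then show ?case using \<nu> t by (simp add: lb_const_def trop_simps)
next
  case (Suc p)
  define a where "a = fst (greedy_uv t \<nu> p)"
  define b where "b = snd (greedy_uv t \<nu> p)"
  have t1: "t \<ge> 1" using t by simp
  have G: "lb_const (Suc p) = 2 * lb_const p" "lb_const p > 0"
    by (simp_all add: lb_const_def)
  have IH: "t powr trop_u p l \<le> lb_const p * a" "t powr trop_v p l \<le> lb_const p * b"
    using Suc by (simp_all add: a_def b_def)
  have "t powr trop_u (Suc p) l = t * min (t powr trop_u p l) (t powr trop_v p l)"
    using t1 by (simp add: trop_simps powr_add powr_min_max)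
  also have "\<dots> \<le> t * min (lb_const p * a) (lb_const p * b)"
    using IH t1 by (intro mult_left_mono min.mono) auto
  also have "\<dots> = lb_const p * (t * min a b)"
    using G(2) by (auto simp: min_def mult_le_cancel_left_pos)
  also have "\<dots> = lb_const (Suc p) * fst (greedy_uv t \<nu> (Suc p))"
    by (simp add: G(1) a_def b_def)
  finally have u: "t powr trop_u (Suc p) l \<le> lb_const (Suc p) * fst (greedy_uv t \<nu> (Suc p))" .
  have "t powr trop_v (Suc p) l = t powr lp_exponent (Suc p) * max (t powr trop_u p l) (t powr trop_v p l)"
    using t1 by (simp add: trop_simps trop_max_def powr_add powr_min_max)
  also have "\<dots> \<le> t powr lp_exponent (Suc p) * (lb_const p * a + lb_const p * b)"
  proof -
    have "0 \<le> t powr trop_u p l" "0 \<le> t powr trop_v p l"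
      by simp_all
    then have "max (t powr trop_u p l) (t powr trop_v p l) \<le> lb_const p * a + lb_const p * b"
      using IH by linarith
    then show ?thesis
      by (simp add: mult_left_mono)
  qed
  also have "\<dots> = lb_const (Suc p) * snd (greedy_uv t \<nu> (Suc p))"
    by (simp add: G(1) a_def[symmetric] b_def[symmetric] algebra_simps)
  finally show ?case
    using u by simp
qed

lemma greedy_uv_ge_lb_const:
  assumes t: "t \<ge> 2" and l: "l \<ge> 0" and \<nu>: "t powr l \<le> 3 * \<nu>" and p: "p \<le> r"
  shows "1 \<le> lb_const r * fst (greedy_uv t \<nu> p) \<and> 1 \<le> lb_const r * snd (greedy_uv t \<nu> p)"
proof -
  have "0 < t powr l"
    using t by simp
  then have "0 < \<nu>"
    using \<nu> by linarith
  then have "0 < fst (greedy_uv t \<nu> p)" "0 < snd (greedy_uv t \<nu> p)"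
    using greedy_uv_pos[of t \<nu> p] t by auto
  then have "lb_const p * fst (greedy_uv t \<nu> p) \<le> lb_const r * fst (greedy_uv t \<nu> p)"
    "lb_const p * snd (greedy_uv t \<nu> p) \<le> lb_const r * snd (greedy_uv t \<nu> p)"
    using lb_const_ge(2)[OF p] by (simp_all add: mult_right_mono)
  moreover have "1 \<le> t powr trop_u p l" "1 \<le> t powr trop_v p l"
    using trop_nonneg[OF l, of p] t by (auto intro: ge_one_powr_ge_zero)
  ultimately show ?thesis
    using greedy_uv_lower[OF t \<nu>, of p] by linarith
qed

lemma greedy_lower_const:
  assumes t: "t \<ge> 2" and l: "l \<ge> 0" and \<nu>: "t powr l \<le> 3 * \<nu>" "\<nu> \<le> t^2 / 2"
  shows "\<forall>j<nvar r. 1 \<le> lb_const r * greedy_x r t \<nu> j"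
    "\<forall>k<ncon r. 1 \<le> lb_const r * lp_slack r t (greedy_x r t \<nu>) k"
proof -
  have t0: "t > 0"
    using t by simp
  then have "0 < t powr l"
    by simp
  then have \<nu>0: "\<nu> > 0"
    using \<nu>(1) by linarith
  note uv = greedy_uv_ge_lb_const[OF t l \<nu>(1)]
  note pos = greedy_uv_pos[OF t0 \<nu>0]
  note slack = greedy_slack_values[OF t0 \<nu>0]
  show "\<forall>j<nvar r. 1 \<le> lb_const r * greedy_x r t \<nu> j"
    using uv by (auto simp: greedy_x_def nvar_def)
  have lift: "1 \<le> lb_const r * s" if "1 \<le> lb_const r * z" "0 < z" "t * z / 2 \<le> s" for z s
  proof -
    have "2 * z \<le> t * z"
      using mult_right_mono[OF t, of z] that(2) by simp
    then have "z \<le> s"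
      using that(3) by linarith
    then show ?thesis
      using that(1) lb_const_ge(1)[of r] mult_left_mono[of z s "lb_const r"] by linarith
  qed
  have "1 \<le> lb_const r * (t / 2)" "1 \<le> lb_const r * (t^2 - \<nu>)"
    using lb_const_ge(1)[of r] t \<nu>(2) mult_mono[OF t t]
      mult_mono[of 1 "lb_const r" 1 "t / 2"] mult_mono[of 1 "lb_const r" 1 "t^2 - \<nu>"]
    by (simp_all add: power2_eq_square)
  then have "1 \<le> lb_const r * lp_slack r t (greedy_x r t \<nu>) 0"
    "1 \<le> lb_const r * lp_slack r t (greedy_x r t \<nu>) 1"
    by (simp_all only: slack(1,2))
  then show "\<forall>k<ncon r. 1 \<le> lb_const r * lp_slack r t (greedy_x r t \<nu>) k"
    by (auto elim!: lp_row_cases intro: lift[OF conjunct1[OF uv] conjunct1[OF pos] slack(3)]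
        lift[OF conjunct2[OF uv] conjunct2[OF pos] slack(4)] simp: uv slack(5) simp del: greedy_uv.simps)
qed

lemma ub_const_le_path_bound:
  assumes "X \<le> ub_const r p * t powr a" "p \<le> r" "a \<le> b" "t \<ge> 1"
  shows "X \<le> path_const r * t powr b"
proof -
  have "ub_const r p * t powr a \<le> path_const r * t powr a"
    using path_const_ge(2)[OF assms(2)] by (intro mult_right_mono) auto
  also have "\<dots> \<le> path_const r * t powr b"
    using assms(3,4) path_const_ge(3)[of r] by (intro mult_left_mono powr_mono) auto
  finally show ?thesis
    using assms(1) by linarith
qed

locale central_point_at_power =
  fixes r :: nat and t l :: real and x w y s :: "nat \<Rightarrow> real"
  assumes r: "r \<ge> 2" and t: "t \<ge> 2" and l: "l \<ge> 0"
    and small_mu: "2 * real (p_dim r) * t powr l \<le> t^2"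
    and cp: "cp_cond r t (t powr l) x w y s"
begin

lemma pos: "\<forall>j<nvar r. 0 < x j \<and> 0 < s j" "\<forall>k<ncon r. 0 < w k \<and> 0 < y k"
  using cp unfolding cp_cond_def by auto

lemma nonneg: "\<forall>j<nvar r. 0 \<le> x j" "\<forall>k<ncon r. 0 \<le> w k"
  using pos by (auto simp: less_imp_le)

lemma dual_slack_beyond: "j \<ge> nvar r \<Longrightarrow> s j = 0"
  using cp unfolding cp_cond_def by auto

lemma rows: "lp_feasible r t x w"
  using cp by (rule cp_cond_lp_feasible)

lemma mu_le: "t powr l \<le> t^2 / 2"
  using small_mu p_dim_ge_4[of r] mult_right_mono[of 1 "real (p_dim r)" "t powr l"] by simp

text \<open>The dual slack of \<open>v_0\<close> is at most \<open>1 + y_1 \<le> 3\<close>: the column of \<open>v_0\<close> has the entry 1 in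
  row 1 and nonpositive entries elsewhere, and \<open>h_0 \<ge> t^2/2\<close> makes \<open>y_1 = \<mu>/h_0\<close> small.\<close>

lemma objective_bounds: "t powr l \<le> 3 * x 1" "x 1 \<le> real (p_dim r) * t powr l"
proof -
  have "(\<Sum>k<ncon r. LPb t k * y k) \<ge> 0"
    using pos(2) t by (intro sum_nonneg) (auto simp: LPb_def)
  then show x1: "x 1 \<le> real (p_dim r) * t powr l"
    using cp_cond_gap[OF cp] by linarith
  have one: "1 < nvar r" "1 < ncon r"
    by (simp_all add: nvar_def ncon_def)
  have "x 1 + w 1 = t^2"
    using rows unfolding lp_feasible_iff by auto
  then have w1: "t^2 / 2 \<le> w 1"
    using x1 small_mu by linarith
  have "w 1 * y 1 = t powr l" and w1_pos: "w 1 > 0"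
    using cp pos one unfolding cp_cond_def by auto
  then have "y 1 = t powr l / w 1"
    by (simp add: field_simps)
  also have "\<dots> \<le> t powr l / (t^2 / 2)"
    by (rule divide_left_mono) (use w1 w1_pos t in auto)
  also have "\<dots> \<le> 1"
    using mu_le t by simp
  finally have y1: "y 1 \<le> 2"
    by simp
  have "(\<Sum>k<ncon r. LPA t k 1 * y k) = LPA t 1 1 * y 1 + (\<Sum>k\<in>{..<ncon r} - {1}. LPA t k 1 * y k)"
    using one by (subst sum.remove) auto
  also have "(\<Sum>k\<in>{..<ncon r} - {1}. LPA t k 1 * y k) \<le> 0"
    using LPA_column_v0_nonpos t pos(2)
    by (intro sum_nonpos) (auto simp: mult_nonpos_nonneg less_imp_le)
  finally have "s 1 \<le> 3"
    using cp one y1 unfolding cp_cond_def by (auto simp: LPA_def LPc_def)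
  moreover have "x 1 * s 1 = t powr l" "x 1 > 0"
    using cp pos one unfolding cp_cond_def by auto
  ultimately show "t powr l \<le> 3 * x 1"
    using mult_left_mono[of "s 1" 3 "x 1"] by (simp add: mult.commute)
qed

lemma x1_le: "x 1 \<le> t^2 / 2"
  using objective_bounds(2) small_mu by linarith

lemma uv_upper:
  "p \<le> r \<Longrightarrow> x (2*p) \<le> ub_const r p * t powr trop_u p l \<and> x (2*p+1) \<le> ub_const r p * t powr trop_v p l"
proof (induction p)
  case 0
  have "x 0 + w 0 = t"
    using rows unfolding lp_feasible_iff by auto
  moreover have "w 0 > 0" "t \<le> real (p_dim r) * t"
    using pos p_dim_ge_4[of r] t by (auto simp: ncon_def)
  ultimately have "x 0 \<le> real (p_dim r) * t"
    by linarith
  then show ?case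
    using objective_bounds(2) t by (simp add: ub_const_def trop_simps)
next
  case (Suc p)
  then have p: "p < r" by simp
  have t1: "t \<ge> 1" using t by simp
  have IH: "x (2*p) \<le> ub_const r p * t powr trop_u p l" "x (2*p+1) \<le> ub_const r p * t powr trop_v p l"
    using Suc by auto
  have K: "ub_const r p \<ge> 0" "ub_const r p \<le> ub_const r (Suc p)"
    by (simp_all add: ub_const_def)
  note row = lp_feasible_row_bounds[OF rows nonneg p]
  have "x (2*p+2) \<le> t * min (x (2*p)) (x (2*p+1))"
    using row(1,2) by simp
  also have "\<dots> \<le> t * min (ub_const r p * t powr trop_u p l) (ub_const r p * t powr trop_v p l)"
    using IH t by (intro mult_left_mono min.mono) auto
  also have "\<dots> = ub_const r p * t powr trop_u (Suc p) l"
    using K(1) t1 by (simp add: min_mult_distrib_left trop_simps powr_add powr_min_max mult.left_commute)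
  also have "\<dots> \<le> ub_const r (Suc p) * t powr trop_u (Suc p) l"
    using K(2) by (simp add: mult_right_mono)
  finally have u: "x (2 * Suc p) \<le> ub_const r (Suc p) * t powr trop_u (Suc p) l"
    by (simp add: numeral_eq_Suc)
  have "x (2*p+3) \<le> 2 * ub_const r p * t powr (lp_exponent (Suc p) + trop_max p l)"
    using row(3) powr_mult_sum_le[OF IH K(1) t1, where a="lp_exponent (Suc p)"]
    unfolding trop_max_def by linarith
  then have "x (2 * Suc p + 1) \<le> ub_const r (Suc p) * t powr trop_v (Suc p) l"
    by (simp add: ub_const_def trop_simps numeral_eq_Suc)
  with u show ?case ..
qed

lemma slack_upper:
  assumes "p < r"
  shows "w (3*p+2) \<le> ub_const r p * t powr (1 + trop_u p l)"
    "w (3*p+3) \<le> ub_const r p * t powr (1 + trop_v p l)"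
    "w (3*p+4) \<le> ub_const r (Suc p) * t powr trop_v (Suc p) l"
proof -
  have t1: "t \<ge> 1" and t0: "t \<ge> 0"
    using t by simp_all
  have IH: "x (2*p) \<le> ub_const r p * t powr trop_u p l" "x (2*p+1) \<le> ub_const r p * t powr trop_v p l"
    using uv_upper[of p] assms by auto
  note row = lp_feasible_row_bounds[OF rows nonneg assms]
  show "w (3*p+2) \<le> ub_const r p * t powr (1 + trop_u p l)"
  proof -
    have "w (3*p+2) \<le> t * (ub_const r p * t powr trop_u p l)"
      using row(4) mult_left_mono[OF IH(1) t0] by linarith
    then show ?thesis
      using t by (simp add: powr_add mult_ac)
  qed
  show "w (3*p+3) \<le> ub_const r p * t powr (1 + trop_v p l)"
  proof -
    have "w (3*p+3) \<le> t * (ub_const r p * t powr trop_v p l)"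
      using row(5) mult_left_mono[OF IH(2) t0] by linarith
    then show ?thesis
      using t by (simp add: powr_add mult_ac)
  qed
  have "w (3*p+4) \<le> 2 * ub_const r p * t powr (lp_exponent (Suc p) + trop_max p l)"
    using row(6) powr_mult_sum_le[OF IH _ t1, where a="lp_exponent (Suc p)"]
    unfolding trop_max_def by (simp add: ub_const_def)
  then show "w (3*p+4) \<le> ub_const r (Suc p) * t powr trop_v (Suc p) l"
    by (simp add: ub_const_def trop_simps)
qed

abbreviation bulk_bound :: real where
  "bulk_bound \<equiv> path_const r * t powr bulk_exp r l"

lemma x_le_bulk: "j < nvar r \<Longrightarrow> x j \<le> bulk_bound"
proof -
  assume "j < nvar r"
  then have p: "j div 2 \<le> r" and "j = 2 * (j div 2) \<or> j = 2 * (j div 2) + 1"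
    by (auto simp: nvar_def)
  then show "x j \<le> bulk_bound"
    using uv_upper[OF p] exponents_le_bulk_exp(1,2)[OF r p, where l=l] t
    by (auto intro: ub_const_le_path_bound[OF _ p])
qed

lemma w_le_bulk:
  assumes k: "k < ncon r" and not_dominant: "k \<noteq> 3*r - 1" "k \<noteq> 3*r"
  shows "w k \<le> bulk_bound"
proof -
  have t1: "t \<ge> 1" using t by simp
  have "x 0 + w 0 = t" "x 1 + w 1 = t^2"
    using rows unfolding lp_feasible_iff by auto
  moreover have "x 0 \<ge> 0" "x 1 \<ge> 0"
    using nonneg by (auto simp: nvar_def)
  moreover have "t \<le> real (p_dim r) * t" "t^2 \<le> real (p_dim r) * t^2"
    using p_dim_ge_4[of r] t mult_right_mono[of 1 "real (p_dim r)" t]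
      mult_right_mono[of 1 "real (p_dim r)" "t^2"] by simp_all
  ultimately have "w 0 \<le> real (p_dim r) * t" "w 1 \<le> real (p_dim r) * t^2"
    by linarith+
  then have w01: "w 0 \<le> ub_const r 0 * t powr 1" "w 1 \<le> ub_const r 0 * t powr 2"
    using t by (simp_all add: ub_const_def powr_realpow)
  have bulk: "1 \<le> bulk_exp r l" "2 \<le> bulk_exp r l"
    using exponents_le_bulk_exp(4)[OF r, where l=l] by simp_all
  have inner: "1 + trop_u p l \<le> bulk_exp r l" "1 + trop_v p l \<le> bulk_exp r l" if "p < r - 1" for p
    using exponents_le_bulk_exp(3)[OF r that, of l] by (auto simp: trop_max_def)
  from k show ?thesis
  proof (cases rule: lp_row_cases)
    case 1
    then show ?thesis
      using ub_const_le_path_bound[OF w01(1) le0 bulk(1) t1] by simp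
  next
    case 2
    then show ?thesis
      using ub_const_le_path_bound[OF w01(2) le0 bulk(2) t1] by simp
  next
    case (3 p)
    then have "p < r - 1" using not_dominant by auto
    with 3 show ?thesis
      using slack_upper(1)[of p] inner by (auto intro: ub_const_le_path_bound[OF _ _ _ t1])
  next
    case (4 p)
    then have "p < r - 1" using not_dominant by auto
    with 4 show ?thesis
      using slack_upper(2)[of p] inner by (auto intro: ub_const_le_path_bound[OF _ _ _ t1])
  next
    case (5 p)
    then show ?thesis
      using slack_upper(3)[of p] exponents_le_bulk_exp(2)[OF r, of "Suc p" l]
      by (auto intro: ub_const_le_path_bound[OF _ _ _ t1])
  qed
qed

lemma greedy_le_central:
  "\<forall>j<nvar r. greedy_x r t (x 1) j \<le> real (p_dim r) * x j"
  "\<forall>k<ncon r. lp_slack r t (greedy_x r t (x 1)) k \<le> real (p_dim r) * w k"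
proof -
  have "0 < t^2"
    using t by simp
  then have "0 < x 1" "x 1 < t^2"
    using pos x1_le by (auto simp: nvar_def)
  then have "strictly_feasible r t (greedy_x r t (x 1))"
    using t by (intro greedy_strictly_feasible) auto
  then show "\<forall>j<nvar r. greedy_x r t (x 1) j \<le> real (p_dim r) * x j"
    "\<forall>k<ncon r. lp_slack r t (greedy_x r t (x 1)) k \<le> real (p_dim r) * w k"
    using lp_feasible_le_central[OF cp lp_feasible_slack] greedy_x_uv(2)[of 0 r t "x 1"]
    unfolding strictly_feasible_def by (auto simp: less_imp_le)
qed

lemma central_lower:
  "j < nvar r \<Longrightarrow> 1 \<le> real (p_dim r) * lb_const r * x j"
  "k < ncon r \<Longrightarrow> 1 \<le> real (p_dim r) * lb_const r * w k"
proof -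
  have \<nu>: "t powr l \<le> 3 * x 1" "x 1 \<le> t^2 / 2"
    using objective_bounds(1) x1_le by auto
  have lb: "lb_const r \<ge> 0"
    using lb_const_ge(1)[of r] by simp
  have chain: "1 \<le> real (p_dim r) * lb_const r * z" if "1 \<le> lb_const r * g" "g \<le> real (p_dim r) * z"
    for g z
    using that mult_left_mono[OF that(2) lb] by (simp add: mult_ac)
  show "j < nvar r \<Longrightarrow> 1 \<le> real (p_dim r) * lb_const r * x j"
    using chain greedy_lower_const(1)[OF t l \<nu>, of r] greedy_le_central(1) by blast
  show "k < ncon r \<Longrightarrow> 1 \<le> real (p_dim r) * lb_const r * w k"
    using chain greedy_lower_const(2)[OF t l \<nu>, of r] greedy_le_central(2) by blast
qed

lemma dual_le_bulk: "k < ncon r \<Longrightarrow> y k \<le> bulk_bound" "j < nvar r \<Longrightarrow> s j \<le> bulk_bound"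
proof -
  have t1: "t \<ge> 1" using t by simp
  have "t powr l \<le> t^2"
    using mu_le zero_le_power2[of t] by linarith
  also have "\<dots> = t powr 2"
    using t by (simp add: powr_realpow)
  also have "\<dots> \<le> t powr bulk_exp r l"
    using exponents_le_bulk_exp(4)[OF r] t1 by (intro powr_mono) auto
  finally have "real (p_dim r) * lb_const r * t powr l \<le> bulk_bound"
    using path_const_ge(1,3)[of r] lb_const_ge(1)[of r] by (intro mult_mono) auto
  moreover have quotient: "t powr l / c \<le> real (p_dim r) * lb_const r * t powr l"
    if "1 \<le> real (p_dim r) * lb_const r * c" "c > 0" for c
  proof -
    have "t powr l * 1 \<le> t powr l * (real (p_dim r) * lb_const r * c)"
      using that(1) by (intro mult_left_mono) auto
    then show ?thesis
      using that(2) by (simp add: divide_le_eq mult_ac)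
  qed
  moreover have "y k = t powr l / w k" if "k < ncon r" for k
    using cp pos that unfolding cp_cond_def by (auto simp: field_simps)
  moreover have "s j = t powr l / x j" if "j < nvar r" for j
    using cp pos that unfolding cp_cond_def by (auto simp: field_simps)
  ultimately show "k < ncon r \<Longrightarrow> y k \<le> bulk_bound" "j < nvar r \<Longrightarrow> s j \<le> bulk_bound"
    using central_lower pos by (metis order_trans)+
qed

lemma dominant_slacks:
  "t powr (1 + trop_u (r - 1) l) \<le> path_const r * w (3*r - 1)"
  "w (3*r - 1) \<le> path_const r * t powr (1 + trop_u (r - 1) l)"
  "t powr (1 + trop_v (r - 1) l) \<le> path_const r * w (3*r)"
  "w (3*r) \<le> path_const r * t powr (1 + trop_v (r - 1) l)"
proof -
  obtain q where q: "r - 1 = q" "3*r - 1 = 3*q+2" "3*r = 3*q+3" "q < r"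
    using r by auto
  have wq: "0 \<le> w (3*q+2)" "0 \<le> w (3*q+3)"
    using nonneg(2) \<open>q < r\<close> by (auto simp: ncon_def)
  have t0: "t > 0" and t1: "t \<ge> 1" using t by simp_all
  show "w (3*r - 1) \<le> path_const r * t powr (1 + trop_u (r - 1) l)"
    "w (3*r) \<le> path_const r * t powr (1 + trop_v (r - 1) l)"
    using slack_upper[OF q(4)] q t1 by (auto intro: ub_const_le_path_bound)
  have \<nu>: "t powr l \<le> 3 * x 1" "0 < x 1"
    using objective_bounds(1) pos by (auto simp: nvar_def)
  have "r = Suc q"
    using q r by simp
  then have lb: "lb_const r = 2 * lb_const q" "0 \<le> lb_const q"
    by (simp_all add: lb_const_def)
  have "lp_slack r t (greedy_x r t (x 1)) (3*q+2) \<le> real (p_dim r) * w (3*q+2)"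
    "lp_slack r t (greedy_x r t (x 1)) (3*q+3) \<le> real (p_dim r) * w (3*q+3)"
    using greedy_le_central(2) q by (simp_all add: ncon_def)
  then have slack: "t * fst (greedy_uv t (x 1) q) / 2 \<le> real (p_dim r) * w (3*q+2)"
    "t * snd (greedy_uv t (x 1) q) / 2 \<le> real (p_dim r) * w (3*q+3)"
    using greedy_slack_values(3,4)[OF t0 \<nu>(2) q(4)] by linarith+
  have "t powr (1 + trop_u q l) \<le> t * (lb_const q * fst (greedy_uv t (x 1) q))"
    using greedy_uv_lower[OF t \<nu>(1), of q] t0 by (simp add: powr_add)
  also have "\<dots> \<le> real (p_dim r) * lb_const r * w (3*q+2)"
    using slack(1) lb mult_left_mono[OF slack(1) lb(2)] by (simp add: mult_ac)
  also have "\<dots> \<le> path_const r * w (3*q+2)"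
    using path_const_ge(1)[of r] wq by (intro mult_right_mono) auto
  finally show "t powr (1 + trop_u (r - 1) l) \<le> path_const r * w (3*r - 1)"
    using q by simp
  have "t powr (1 + trop_v q l) \<le> t * (lb_const q * snd (greedy_uv t (x 1) q))"
    using greedy_uv_lower[OF t \<nu>(1), of q] t0 by (simp add: powr_add)
  also have "\<dots> \<le> real (p_dim r) * lb_const r * w (3*q+3)"
    using slack(2) lb mult_left_mono[OF slack(2) lb(2)] by (simp add: mult_ac)
  also have "\<dots> \<le> path_const r * w (3*q+3)"
    using path_const_ge(1)[of r] wq by (intro mult_right_mono) auto
  finally show "t powr (1 + trop_v (r - 1) l) \<le> path_const r * w (3*r)"
    using q by simp
qed

end

definition idx_z :: "nat \<Rightarrow> nat" where "idx_z r = nvar r + (3*r - 1)"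
definition idx_z' :: "nat \<Rightarrow> nat" where "idx_z' r = nvar r + 3*r"

lemma idx_z_bounds: "r \<ge> 1 \<Longrightarrow> idx_z r \<noteq> idx_z' r" "idx_z r < p_dim r" "idx_z' r < p_dim r"
  by (auto simp: idx_z_def idx_z'_def p_dim_def ncon_def)

lemma p_dim_le_pd_dim: "p_dim r \<le> pd_dim r"
  by (simp add: p_dim_def pd_dim_def)

lemma p_path_eq_pd_path: "i < p_dim r \<Longrightarrow> p_path r t l i = pd_path r t l i"
  unfolding p_path_def pd_path_def by (cases "cp_point r t (t powr l)") (auto simp: p_dim_def)

lemma pd_path_bounds:
  assumes r: "r \<ge> 2" and t: "t \<ge> 2" and l: "l \<ge> 0"
    and small_mu: "2 * real (p_dim r) * t powr l \<le> t^2"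
  shows "i < pd_dim r \<Longrightarrow> 0 \<le> pd_path r t l i"
    and "i < pd_dim r \<Longrightarrow> i \<noteq> idx_z r \<Longrightarrow> i \<noteq> idx_z' r \<Longrightarrow>
           pd_path r t l i \<le> path_const r * t powr bulk_exp r l"
    and "t powr (1 + trop_u (r - 1) l) \<le> path_const r * pd_path r t l (idx_z r)"
    and "pd_path r t l (idx_z r) \<le> path_const r * t powr (1 + trop_u (r - 1) l)"
    and "t powr (1 + trop_v (r - 1) l) \<le> path_const r * pd_path r t l (idx_z' r)"
    and "pd_path r t l (idx_z' r) \<le> path_const r * t powr (1 + trop_v (r - 1) l)"
proof -
  have "t powr l > 0"
    using t by simp
  then obtain x w y s where eq: "cp_point r t (t powr l) = (x, w, y, s)"
    and cp: "cp_cond r t (t powr l) x w y s"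
    using cp_point_cond[OF t, where r=r] by blast
  interpret central_point_at_power r t l x w y s
    by unfold_locales (fact r t l small_mu cp)+
  have P: "pd_path r t l i =
      (if i < nvar r then x i
       else if i < nvar r + ncon r then w (i - nvar r)
       else if i < 2 * nvar r + ncon r then y (i - (nvar r + ncon r))
       else if i < pd_dim r then s (i - (2 * nvar r + ncon r))
       else 0)" for i
    unfolding pd_path_def eq by simp
  have idx: "pd_path r t l (idx_z r) = w (3*r - 1)" "pd_path r t l (idx_z' r) = w (3*r)"
    using r unfolding P by (auto simp: idx_z_def idx_z'_def ncon_def)
  show "t powr (1 + trop_u (r - 1) l) \<le> path_const r * pd_path r t l (idx_z r)"
    "pd_path r t l (idx_z r) \<le> path_const r * t powr (1 + trop_u (r - 1) l)"
    "t powr (1 + trop_v (r - 1) l) \<le> path_const r * pd_path r t l (idx_z' r)"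
    "pd_path r t l (idx_z' r) \<le> path_const r * t powr (1 + trop_v (r - 1) l)"
    unfolding idx by (fact dominant_slacks)+
  have nm: "nvar r \<le> ncon r"
    by (simp add: nvar_def ncon_def)
  have "0 \<le> s j" for j
    using pos dual_slack_beyond by (cases "j < nvar r") (auto simp: less_imp_le)
  then show "i < pd_dim r \<Longrightarrow> 0 \<le> pd_path r t l i"
    using pos nm by (auto simp: P pd_dim_def less_imp_le)
  have "s j \<le> bulk_bound" for j
    using dual_le_bulk(2)[of j] dual_slack_beyond[of j] path_const_ge(3)[of r]
    by (cases "j < nvar r") auto
  then show "pd_path r t l i \<le> path_const r * t powr bulk_exp r l"
    if "i < pd_dim r" "i \<noteq> idx_z r" "i \<noteq> idx_z' r"
    using that x_le_bulk w_le_bulk dual_le_bulk(1) nm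
    by (auto simp: P pd_dim_def idx_z_def idx_z'_def)
qed

section \<open>A grid on which the dominant coordinate alternates\<close>

text \<open>The grid points \<open>k / 2^(r-2)\<close>, at which \<open>trop_diff (r-1)\<close> is \<open>\<plusminus>2^(1-r)\<close>, shrunk slightly so
  that the last one, \<open>2 - 2^-(r+1)\<close>, stays below 2: this keeps \<open>t^\<lambda>\<close> small compared with \<open>t^2\<close>.\<close>

lemma half_power_mult: "(2::real) ^ (q + 1) * (1/2) ^ q = 2"
  by (simp add: power_one_over)

lemma half_power_mult_twice: "(2::real) ^ (q + 1) * (1/2) ^ (2 * (q + 2)) = (1/2) ^ (q + 3)"
proof -
  have "2 * (q + 2) = (q + 1) + (q + 3)"
    by simp
  then have "(1/2::real) ^ (2 * (q + 2)) = (1/2) ^ (q + 1) * (1/2) ^ (q + 3)"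
    by (simp only: power_add)
  then show ?thesis
    by (simp add: power_one_over)
qed

definition grid_len :: "nat \<Rightarrow> nat" where
  "grid_len r = 2 ^ (r - 1)"

definition grid :: "nat \<Rightarrow> nat \<Rightarrow> real" where
  "grid r k = real k * ((1/2) ^ (r - 2) - (1/2) ^ (2*r))"

lemma grid_strict_mono: "r \<ge> 2 \<Longrightarrow> k < k' \<Longrightarrow> grid r k < grid r k'"
  unfolding grid_def using power_strict_decreasing[of "r - 2" "2*r" "1/2::real"]
  by (intro mult_strict_right_mono) auto

lemma grid_range:
  assumes r: "r \<ge> 2" and k: "k \<le> grid_len r"
  shows "0 \<le> grid r k" "grid r k \<le> 2 - (1/2) ^ (r + 1)"
proof -
  obtain q where q: "r = q + 2"
    using r by (metis add.commute le_Suc_ex)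
  have step: "(1/2::real) ^ (2*r) \<le> (1/2) ^ (r - 2)"
    using r by (intro power_decreasing) auto
  then show "0 \<le> grid r k"
    unfolding grid_def by simp
  have "grid r k \<le> grid r (grid_len r)"
    unfolding grid_def using k step by (intro mult_right_mono) auto
  also have "\<dots> = 2 ^ (q + 1) * (1/2) ^ q - 2 ^ (q + 1) * (1/2) ^ (2 * (q + 2))"
    by (simp add: grid_def grid_len_def q right_diff_distrib)
  also have "\<dots> = 2 - (1/2) ^ (q + 3)"
    using half_power_mult[of q] half_power_mult_twice[of q] by (simp add: mult_ac)
  also have "q + 3 = r + 1"
    using q by simp
  finally show "grid r k \<le> 2 - (1/2) ^ (r + 1)" .
qed

lemma grid_inscribed:
  assumes r: "r \<ge> 2"
  shows "strict_mono_on {..grid_len r} (grid r)" "grid r ` {..grid_len r} \<subseteq> {0..2}"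
proof -
  have "grid r k \<in> {0..2}" if "k \<le> grid_len r" for k
  proof -
    have "(0::real) \<le> (1/2) ^ (r + 1)"
      by simp
    then have "0 \<le> grid r k" "grid r k \<le> 2"
      using grid_range[OF r that] by linarith+
    then show ?thesis
      by simp
  qed
  then show "strict_mono_on {..grid_len r} (grid r)" "grid r ` {..grid_len r} \<subseteq> {0..2}"
    using grid_strict_mono[OF r] by (auto simp: strict_mono_on_def)
qed

lemma trop_diff_at_grid:
  assumes r: "r \<ge> 2" and k: "k \<le> grid_len r"
  shows "even k \<Longrightarrow> dominance_gap r \<le> trop_diff (r - 1) (grid r k)"
    and "odd k \<Longrightarrow> trop_diff (r - 1) (grid r k) \<le> - dominance_gap r"
proof -
  obtain q where q: "r = q + 2"
    using r by (metis add.commute le_Suc_ex)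
  have k2: "k \<le> 2 ^ Suc q"
    using k unfolding grid_len_def q by simp
  have "\<bar>grid r k - real k / 2 ^ q\<bar> = real k * (1/2) ^ (2 * (q + 2))"
    by (simp add: grid_def q power_one_over algebra_simps)
  also have "\<dots> \<le> 2 ^ (q + 1) * (1/2) ^ (2 * (q + 2))"
  proof -
    have "real k \<le> real (2 ^ Suc q)"
      using k2 by (simp only: of_nat_le_iff)
    then show ?thesis
      by (intro mult_right_mono) simp_all
  qed
  also have "\<dots> = (1/2) ^ (q + 3)"
    by (rule half_power_mult_twice)
  finally have "\<bar>trop_diff (Suc q) (grid r k) - (-1) ^ k * (1/2) ^ Suc q\<bar> \<le> (1/2) ^ (q + 3)"
    using trop_diff_lipschitz[of "Suc q" "grid r k" "real k / 2 ^ q"] trop_diff_dyadic[OF k2]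
    by simp
  moreover have "(1/2::real) ^ Suc q = 4 * (1/2) ^ (q + 3)" "(1/2::real) ^ (q + 2) = 2 * (1/2) ^ (q + 3)"
    by (simp_all add: numeral_eq_Suc)
  ultimately show "even k \<Longrightarrow> dominance_gap r \<le> trop_diff (r - 1) (grid r k)"
    "odd k \<Longrightarrow> trop_diff (r - 1) (grid r k) \<le> - dominance_gap r"
    by (auto simp: q dominance_gap_def abs_le_iff)
qed

lemma grid_exponents:
  assumes r: "r \<ge> 2" and k: "k \<le> grid_len r"
  defines "l \<equiv> grid r k"
  shows "even k \<Longrightarrow> 1 + trop_v (r - 1) l = top_exp r l \<and> 1 + trop_u (r - 1) l \<le> top_exp r l - dominance_gap r"
    and "odd k \<Longrightarrow> 1 + trop_u (r - 1) l = top_exp r l \<and> 1 + trop_v (r - 1) l \<le> top_exp r l - dominance_gap r"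
    and "bulk_exp r l = top_exp r l - dominance_gap r"
proof -
  have D: "even k \<Longrightarrow> dominance_gap r \<le> trop_v (r - 1) l - trop_u (r - 1) l"
    "odd k \<Longrightarrow> trop_v (r - 1) l - trop_u (r - 1) l \<le> - dominance_gap r"
    using trop_diff_at_grid[OF r k] trop_v_minus_u[of "r - 1" l] unfolding l_def by simp_all
  then show "even k \<Longrightarrow> 1 + trop_v (r - 1) l = top_exp r l \<and> 1 + trop_u (r - 1) l \<le> top_exp r l - dominance_gap r"
    "odd k \<Longrightarrow> 1 + trop_u (r - 1) l = top_exp r l \<and> 1 + trop_v (r - 1) l \<le> top_exp r l - dominance_gap r"
    using dominance_gap_pos[of r] by (auto simp: top_exp_def trop_max_def max_def)
  have "1 + min (trop_u (r - 1) l) (trop_v (r - 1) l) \<le> top_exp r l - dominance_gap r"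
    using D by (cases "even k") (auto simp: top_exp_def trop_max_def max_def min_def)
  then show "bulk_exp r l = top_exp r l - dominance_gap r"
    unfolding bulk_exp_def by simp
qed

lemma top_exp_grid_step:
  assumes r: "r \<ge> 2" and k: "1 \<le> k" "k \<le> grid_len r"
  shows "top_exp r (grid r (k - 1)) \<le> top_exp r (grid r k) - dominance_gap r"
proof -
  have "grid r (k - 1) \<le> grid r k"
    using grid_strict_mono[OF r, of "k - 1" k] k by simp
  then have mono: "trop_u (r - 1) (grid r (k - 1)) \<le> trop_u (r - 1) (grid r k)"
    "trop_v (r - 1) (grid r (k - 1)) \<le> trop_v (r - 1) (grid r k)"
    using trop_mono by blast+
  have "k - 1 \<le> grid_len r" "even k \<longleftrightarrow> odd (k - 1)"
    using k by auto
  then show ?thesis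
    using grid_exponents(1,2)[OF r k(2)] grid_exponents(1,2)[OF r \<open>k - 1 \<le> grid_len r\<close>] mono
    unfolding top_exp_def trop_max_def by (cases "even k") auto
qed

lemma pd_path_at_grid:
  assumes r: "r \<ge> 2" and t: "t \<ge> 2" and k: "k \<le> grid_len r"
    and H: "2 * real (p_dim r) * t powr (2 - (1/2) ^ (r + 1)) \<le> t^2"
  defines "l \<equiv> grid r k" and "jj \<equiv> if even k then idx_z' r else idx_z r"
  shows "i < pd_dim r \<Longrightarrow> 0 \<le> pd_path r t l i"
    and "i < pd_dim r \<Longrightarrow> pd_path r t l i \<le> path_const r * t powr top_exp r l"
    and "t powr top_exp r l \<le> path_const r * pd_path r t l jj"
    and "i < pd_dim r \<Longrightarrow> i \<noteq> jj \<Longrightarrow> pd_path r t l i \<le> path_const r * t powr (top_exp r l - dominance_gap r)"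
proof -
  have t1: "t \<ge> 1" using t by simp
  have "0 \<le> l" "l \<le> 2 - (1/2) ^ (r + 1)"
    using grid_range[OF r k] unfolding l_def by auto
  then have "2 * real (p_dim r) * t powr l \<le> 2 * real (p_dim r) * t powr (2 - (1/2) ^ (r + 1))"
    using t1 by (intro mult_left_mono powr_mono) auto
  note B = pd_path_bounds[OF r t \<open>0 \<le> l\<close> order_trans[OF this H]]
  have K: "0 \<le> path_const r"
    using path_const_ge(3)[of r] by simp
  have top: "t powr (1 + trop_u (r - 1) l) \<le> t powr top_exp r l" "t powr (1 + trop_v (r - 1) l) \<le> t powr top_exp r l"
    "t powr bulk_exp r l \<le> t powr top_exp r l"
    using t1 bulk_exp_le_top_exp by (auto intro!: powr_mono simp: top_exp_def trop_max_def)
  show "i < pd_dim r \<Longrightarrow> 0 \<le> pd_path r t l i"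
    by (rule B(1))
  show "pd_path r t l i \<le> path_const r * t powr top_exp r l" if "i < pd_dim r"
  proof -
    consider "i = idx_z r" | "i = idx_z' r" | "i \<noteq> idx_z r" "i \<noteq> idx_z' r"
      by blast
    then show ?thesis
      using B(2)[OF that] B(4,6) mult_left_mono[OF top(1) K] mult_left_mono[OF top(2) K]
        mult_left_mono[OF top(3) K]
      by cases auto
  qed
  note G = grid_exponents[OF r k, folded l_def]
  show "t powr top_exp r l \<le> path_const r * pd_path r t l jj"
    using B(3,5) G(1,2) unfolding jj_def by (cases "even k") auto
  have dom: "even k \<Longrightarrow> t powr (1 + trop_u (r - 1) l) \<le> t powr (top_exp r l - dominance_gap r)"
    "odd k \<Longrightarrow> t powr (1 + trop_v (r - 1) l) \<le> t powr (top_exp r l - dominance_gap r)"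
    using G(1,2) t1 by (auto intro: powr_mono)
  show "pd_path r t l i \<le> path_const r * t powr (top_exp r l - dominance_gap r)"
    if "i < pd_dim r" "i \<noteq> jj"
    using that B(2)[of i] B(4,6) G(3) dom mult_left_mono[OF _ K] unfolding jj_def
    by (cases "even k") (auto intro: order_trans)
qed

section \<open>Curvature of the inscribed polygon\<close>

lemma abs_le_normp: "j < p \<Longrightarrow> \<bar>d j\<bar> \<le> normp p d"
proof -
  assume j: "j < p"
  have "d j * d j \<le> (\<Sum>i<p. d i * d i)"
    by (rule member_le_sum) (use j in auto)
  then have "sqrt (d j * d j) \<le> sqrt (\<Sum>i<p. d i * d i)"
    by (rule real_sqrt_le_mono)
  then show ?thesis
    by (simp add: normp_def dotp_def)
qed

lemma abs_product_le_of_dominant_coordinates: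
  fixes d d' :: "nat \<Rightarrow> real"
  assumes i: "i < p" and jj: "j \<noteq> j'" and \<theta>: "0 \<le> \<theta>" "\<theta> \<le> 1"
    and D: "\<forall>i<p. i \<noteq> j \<longrightarrow> \<bar>d i\<bar> \<le> \<theta> * \<bar>d j\<bar>"
    and D': "\<forall>i<p. i \<noteq> j' \<longrightarrow> \<bar>d' i\<bar> \<le> \<theta> * \<bar>d' j'\<bar>"
  shows "\<bar>d i * d' i\<bar> \<le> \<theta> * (\<bar>d j\<bar> * \<bar>d' j'\<bar>)"
proof -
  consider "i = j" | "i = j'" | "i \<noteq> j" "i \<noteq> j'"
    by blast
  then show ?thesis
  proof cases
    case 1
    then have "\<bar>d' i\<bar> \<le> \<theta> * \<bar>d' j'\<bar>"
      using D' i jj by auto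
    then show ?thesis
      using 1 mult_left_mono[of "\<bar>d' i\<bar>" "\<theta> * \<bar>d' j'\<bar>" "\<bar>d j\<bar>"] by (simp add: abs_mult mult_ac)
  next
    case 2
    then have "\<bar>d i\<bar> \<le> \<theta> * \<bar>d j\<bar>"
      using D i jj by auto
    then show ?thesis
      using 2 mult_right_mono[of "\<bar>d i\<bar>" "\<theta> * \<bar>d j\<bar>" "\<bar>d' j'\<bar>"] by (simp add: abs_mult mult_ac)
  next
    case 3
    then have "\<bar>d i\<bar> \<le> \<theta> * \<bar>d j\<bar>" "\<bar>d' i\<bar> \<le> \<theta> * \<bar>d' j'\<bar>"
      using D D' i by auto
    then have "\<bar>d i\<bar> * \<bar>d' i\<bar> \<le> (\<theta> * \<bar>d j\<bar>) * (\<theta> * \<bar>d' j'\<bar>)"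
      by (intro mult_mono) auto
    also have "\<dots> \<le> \<bar>d j\<bar> * (\<theta> * \<bar>d' j'\<bar>)"
      using \<theta> mult_left_le_one_le[of "\<bar>d j\<bar>" \<theta>] by (intro mult_right_mono) auto
    finally show ?thesis
      by (simp add: abs_mult mult_ac)
  qed
qed

lemma vang_ge_of_dominant_coordinates:
  fixes d d' :: "nat \<Rightarrow> real"
  assumes j: "j < p" and j': "j' < p" and jj: "j \<noteq> j'" and \<theta>: "0 \<le> \<theta>" "\<theta> \<le> 1"
    and dj: "d j \<noteq> 0" and dj': "d' j' \<noteq> 0"
    and D: "\<forall>i<p. i \<noteq> j \<longrightarrow> \<bar>d i\<bar> \<le> \<theta> * \<bar>d j\<bar>"
    and D': "\<forall>i<p. i \<noteq> j' \<longrightarrow> \<bar>d' i\<bar> \<le> \<theta> * \<bar>d' j'\<bar>"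
    and p\<theta>: "real p * \<theta> \<le> sin \<epsilon>" and \<epsilon>: "0 < \<epsilon>" "\<epsilon> < pi/2"
  shows "pi/2 - \<epsilon> \<le> vang p d d'"
proof -
  define a where "a = \<bar>d j\<bar>"
  define b where "b = \<bar>d' j'\<bar>"
  have ab: "a > 0" "b > 0"
    using dj dj' unfolding a_def b_def by auto
  have norms: "a \<le> normp p d" "b \<le> normp p d'"
    unfolding a_def b_def using abs_le_normp j j' by auto
  have products: "\<bar>d i * d' i\<bar> \<le> \<theta> * (a * b)" if "i < p" for i
    using abs_product_le_of_dominant_coordinates[OF that jj \<theta> D D'] unfolding a_def b_def .
  have np: "normp p d > 0" "normp p d' > 0"
    using norms ab by linarith+
  define c where "c = dotp p d d' / (normp p d * normp p d')"
  have "\<bar>dotp p d d'\<bar> \<le> (\<Sum>i<p. \<theta> * (a * b))"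
    unfolding dotp_def by (rule order_trans[OF sum_abs sum_mono]) (use products in auto)
  also have "\<dots> = real p * \<theta> * (a * b)"
    by simp
  also have "\<dots> \<le> real p * \<theta> * (normp p d * normp p d')"
    using norms ab \<theta> by (intro mult_left_mono mult_mono) auto
  finally have "\<bar>c\<bar> \<le> real p * \<theta>"
    using np unfolding c_def by (simp add: abs_divide divide_le_eq abs_mult)
  then have "-1 \<le> c" "c \<le> sin \<epsilon>"
    using p\<theta> sin_le_one[of \<epsilon>] abs_le_iff[of c "real p * \<theta>"] by linarith+
  then have "arccos (sin \<epsilon>) \<le> arccos c"
    by (intro arccos_le_arccos) auto
  moreover have "arccos (sin \<epsilon>) = pi/2 - \<epsilon>"
    using \<epsilon> arccos_cos[of "pi/2 - \<epsilon>"] by (simp add: cos_diff)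
  ultimately show ?thesis
    using np by (simp add: vang_def c_def)
qed

lemma segment_near_axis:
  fixes a b :: "nat \<Rightarrow> real"
  assumes a0: "\<forall>i<p. 0 \<le> a i" and b0: "\<forall>i<p. 0 \<le> b i" and j: "j < p"
    and bj: "A \<le> K * b j" and ab: "\<forall>i<p. a i \<le> K * B" and bb: "\<forall>i<p. i \<noteq> j \<longrightarrow> b i \<le> K * B"
    and K: "K > 0" and A: "A > 0" and B: "B \<ge> 0" and small: "2 * K^2 * B \<le> A"
  shows "0 < b j - a j" "\<forall>i<p. i \<noteq> j \<longrightarrow> \<bar>b i - a i\<bar> \<le> (2 * K^2 * B / A) * \<bar>b j - a j\<bar>"
proof -
  have KB: "K * B \<le> A / (2 * K)"
    using small K by (simp add: field_simps power2_eq_square)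
  have "A / (2 * K) \<le> b j - a j"
  proof -
    have "A / K \<le> b j"
      using bj K by (simp add: divide_le_eq mult.commute)
    moreover have "A / K = 2 * (A / (2 * K))"
      using K by simp
    moreover have "a j \<le> K * B"
      using ab j by blast
    ultimately show ?thesis
      using KB by linarith
  qed
  moreover have "0 < A / (2 * K)"
    using A K by simp
  ultimately show "0 < b j - a j"
    by linarith
  show "\<forall>i<p. i \<noteq> j \<longrightarrow> \<bar>b i - a i\<bar> \<le> (2 * K^2 * B / A) * \<bar>b j - a j\<bar>"
  proof (intro allI impI)
    fix i assume i: "i < p" "i \<noteq> j"
    have "0 \<le> a i" "0 \<le> b i" "a i \<le> K * B" "b i \<le> K * B"
      using a0 b0 ab bb i by auto
    then have "\<bar>b i - a i\<bar> \<le> K * B"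
      by (simp add: abs_le_iff)
    also have "K * B = (2 * K^2 * B / A) * (A / (2 * K))"
      using K A by (simp add: field_simps power2_eq_square)
    also have "\<dots> \<le> (2 * K^2 * B / A) * \<bar>b j - a j\<bar>"
      using \<open>A / (2 * K) \<le> b j - a j\<close> K A B by (intro mult_left_mono) auto
    finally show "\<bar>b i - a i\<bar> \<le> (2 * K^2 * B / A) * \<bar>b j - a j\<bar>" .
  qed
qed

lemma total_curvature_ge_polygon:
  assumes "strict_mono_on {..N} \<tau>" "\<tau> ` {..N} \<subseteq> S"
  shows "ereal (poly_curv p (\<lambda>k. \<sigma> (\<tau> k)) N) \<le> total_curvature p \<sigma> S"
proof -
  have "(N, \<tau>) \<in> {(N, \<tau>). strict_mono_on {..N} \<tau> \<and> \<tau> ` {..N} \<subseteq> S}"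
    using assms by simp
  from SUP_upper[OF this, of "\<lambda>(N, \<tau>). ereal (poly_curv p (\<lambda>k. \<sigma> (\<tau> k)) N)"]
  show ?thesis
    unfolding total_curvature_def by simp
qed

lemma total_curvature_nonneg:
  assumes "0 \<in> S"
  shows "0 \<le> total_curvature p \<sigma> S"
proof -
  have "ereal (poly_curv p (\<lambda>k. \<sigma> ((\<lambda>_. 0) k)) 0) \<le> total_curvature p \<sigma> S"
    by (rule total_curvature_ge_polygon) (use assms in \<open>auto simp: strict_mono_on_def\<close>)
  then show ?thesis
    by (simp add: poly_curv_def zero_ereal_def)
qed

lemma grid_segment_near_axis:
  assumes r: "r \<ge> 2" and t: "t \<ge> 2"
    and H: "2 * real (p_dim r) * t powr (2 - (1/2) ^ (r + 1)) \<le> t^2"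
    and small: "2 * (path_const r)^2 * t powr (- dominance_gap r) \<le> 1"
    and k: "1 \<le> k" "k \<le> grid_len r"
  defines "P \<equiv> \<lambda>k. pd_path r t (grid r k)" and "jj \<equiv> if even k then idx_z' r else idx_z r"
  shows "0 < P k jj - P (k - 1) jj"
    and "\<forall>i<pd_dim r. i \<noteq> jj \<longrightarrow>
           \<bar>P k i - P (k - 1) i\<bar> \<le> 2 * (path_const r)^2 * t powr (- dominance_gap r) * \<bar>P k jj - P (k - 1) jj\<bar>"
proof -
  define E where "E = top_exp r (grid r k)"
  have t1: "t \<ge> 1" using t by simp
  have K: "path_const r > 0"
    using path_const_ge(3)[of r] by simp
  have ratio: "2 * (path_const r)^2 * t powr (E - dominance_gap r) / t powr E
      = 2 * (path_const r)^2 * t powr (- dominance_gap r)"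
    using t1 by (simp add: powr_diff powr_minus divide_inverse)
  have k': "k - 1 \<le> grid_len r"
    using k by simp
  note now = pd_path_at_grid[OF r t k(2) H, folded jj_def E_def]
  note before = pd_path_at_grid[OF r t k' H]
  have "t powr top_exp r (grid r (k - 1)) \<le> t powr (E - dominance_gap r)"
    using top_exp_grid_step[OF r k] t1 unfolding E_def by (intro powr_mono) auto
  then have "\<forall>i<pd_dim r. P (k - 1) i \<le> path_const r * t powr (E - dominance_gap r)"
    using before(2) K unfolding P_def by (meson mult_left_mono less_imp_le order_trans)
  moreover have "jj < pd_dim r"
    using idx_z_bounds(2,3)[of r] p_dim_le_pd_dim[of r] unfolding jj_def by auto
  moreover have "2 * (path_const r)^2 * t powr (E - dominance_gap r) \<le> t powr E"
  proof -
    have "0 < t powr E"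
      using t by simp
    moreover have "2 * (path_const r)^2 * t powr (E - dominance_gap r) / t powr E \<le> 1"
      using small ratio by simp
    ultimately show ?thesis
      by (simp add: pos_divide_le_eq)
  qed
  ultimately show "0 < P k jj - P (k - 1) jj"
    "\<forall>i<pd_dim r. i \<noteq> jj \<longrightarrow>
       \<bar>P k i - P (k - 1) i\<bar> \<le> 2 * (path_const r)^2 * t powr (- dominance_gap r) * \<bar>P k jj - P (k - 1) jj\<bar>"
    using segment_near_axis[of "pd_dim r" "P (k - 1)" "P k" jj "t powr E" "path_const r"
        "t powr (E - dominance_gap r)"] before(1) now(1,3,4) K t
    unfolding ratio P_def by auto
qed

lemma inscribed_polygon_curvature:
  assumes r: "r \<ge> 2" and t: "t \<ge> 2" and \<epsilon>: "0 < \<epsilon>" "\<epsilon> < pi/2"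
    and H: "2 * real (p_dim r) * t powr (2 - (1/2) ^ (r + 1)) \<le> t^2"
    and small: "2 * (path_const r)^2 * t powr (- dominance_gap r) \<le> 1"
    and small_angle: "real q * (2 * (path_const r)^2 * t powr (- dominance_gap r)) \<le> sin \<epsilon>"
    and C: "q \<le> pd_dim r" "idx_z r < q" "idx_z' r < q" "\<And>l i. i < q \<Longrightarrow> C l i = pd_path r t l i"
  shows "(real (grid_len r) - 1) * (pi/2 - \<epsilon>) \<le> poly_curv q (\<lambda>k. C (grid r k)) (grid_len r)"
proof -
  define P where "P k = C (grid r k)" for k :: nat
  define jj where "jj k = (if even k then idx_z' r else idx_z r)" for k :: nat
  define \<theta> where "\<theta> = 2 * (path_const r)^2 * t powr (- dominance_gap r)"
  have near_axis: "0 < P k (jj k) - P (k - 1) (jj k)"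
    "\<forall>i<q. i \<noteq> jj k \<longrightarrow> \<bar>P k i - P (k - 1) i\<bar> \<le> \<theta> * \<bar>P k (jj k) - P (k - 1) (jj k)\<bar>"
    if "1 \<le> k" "k \<le> grid_len r" for k :: nat
    using grid_segment_near_axis[OF r t H small that] C idx_z_bounds(2,3)[of r]
    unfolding P_def jj_def \<theta>_def by (auto split: if_splits)
  have "pi/2 - \<epsilon> \<le> vang q (P k - P (k - 1)) (P (k + 1) - P k)" if k: "k \<in> {1..<grid_len r}" for k
  proof (rule vang_ge_of_dominant_coordinates)
    show "jj k < q" "jj (k + 1) < q" "jj k \<noteq> jj (k + 1)"
      using C(2,3) idx_z_bounds(1)[of r] r unfolding jj_def by auto
    show "0 \<le> \<theta>" "\<theta> \<le> 1" "real q * \<theta> \<le> sin \<epsilon>"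
      using small small_angle unfolding \<theta>_def by simp_all
    show "(P k - P (k - 1)) (jj k) \<noteq> 0" "(P (k + 1) - P k) (jj (k + 1)) \<noteq> 0"
      using near_axis(1)[of k] near_axis(1)[of "k + 1"] k by auto
    show "\<forall>i<q. i \<noteq> jj k \<longrightarrow> \<bar>(P k - P (k - 1)) i\<bar> \<le> \<theta> * \<bar>(P k - P (k - 1)) (jj k)\<bar>"
      "\<forall>i<q. i \<noteq> jj (k + 1) \<longrightarrow> \<bar>(P (k + 1) - P k) i\<bar> \<le> \<theta> * \<bar>(P (k + 1) - P k) (jj (k + 1))\<bar>"
      using near_axis(2)[of k] near_axis(2)[of "k + 1"] k by auto
  qed (use \<epsilon> in auto)
  then have "(\<Sum>k\<in>{1..<grid_len r}. pi/2 - \<epsilon>) \<le> poly_curv q P (grid_len r)"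
    unfolding poly_curv_def by (intro sum_mono) auto
  moreover have "grid_len r \<ge> 1"
    by (simp add: grid_len_def)
  moreover have "P = (\<lambda>k. C (grid r k))"
    by (rule ext) (simp add: P_def)
  ultimately show ?thesis
    by (simp add: of_nat_diff)
qed

section \<open>The limit inferior of the total curvature\<close>

lemma eventually_large_parameter:
  assumes r: "r \<ge> 2" and c: "c > 0"
  shows "eventually (\<lambda>t. 2 \<le> t \<and> 2 * real (p_dim r) * t powr (2 - (1/2) ^ (r + 1)) \<le> t^2 \<and>
                          t powr (- dominance_gap r) \<le> c) at_top"
proof -
  have n: "real (p_dim r) > 0"
    using p_dim_ge_4[of r] by simp
  have small_powr: "eventually (\<lambda>t. t powr s < d) at_top" if "s < 0" "d > 0" for s d :: real
    using order_tendstoD(2)[OF tendsto_neg_powr[OF that(1) filterlim_ident] that(2)] .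
  have "eventually (\<lambda>t. t powr (- ((1/2) ^ (r + 1))) < 1 / (2 * real (p_dim r))) at_top"
    by (rule small_powr) (use n in auto)
  moreover have "eventually (\<lambda>t. t powr (- dominance_gap r) < c) at_top"
    by (rule small_powr) (use dominance_gap_pos[of r] c in auto)
  ultimately have "eventually (\<lambda>t. 2 \<le> t \<and> t powr (- ((1/2) ^ (r + 1))) < 1 / (2 * real (p_dim r)) \<and>
      t powr (- dominance_gap r) < c) at_top"
    using eventually_ge_at_top[of "2::real"] by eventually_elim auto
  then show ?thesis
  proof (rule eventually_mono)
    fix t :: real
    assume t: "2 \<le> t \<and> t powr (- ((1/2) ^ (r + 1))) < 1 / (2 * real (p_dim r)) \<and> t powr (- dominance_gap r) < c"
    have "t powr (2 - (1/2) ^ (r + 1)) = t powr 2 * t powr (- ((1/2) ^ (r + 1)))"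
      by (simp add: powr_add[symmetric])
    also have "\<dots> \<le> t^2 * (1 / (2 * real (p_dim r)))"
    proof -
      have X: "t powr (- ((1/2) ^ (r + 1))) \<le> 1 / (2 * real (p_dim r))"
        using t by linarith
      have t2: "t powr 2 = t^2"
        using t by (simp add: powr_realpow)
      from mult_left_mono[OF X zero_le_power2[of t]] show ?thesis
        unfolding t2 .
    qed
    finally have "2 * real (p_dim r) * t powr (2 - (1/2) ^ (r + 1))
        \<le> 2 * real (p_dim r) * (t^2 * (1 / (2 * real (p_dim r))))"
      using n by (intro mult_left_mono) auto
    also have "\<dots> = t^2"
      using n by simp
    finally show "2 \<le> t \<and> 2 * real (p_dim r) * t powr (2 - (1/2) ^ (r + 1)) \<le> t^2 \<and>
        t powr (- dominance_gap r) \<le> c"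
      using t by simp
  qed
qed

lemma angle_defect_exists:
  assumes "b < (real N - 1) * (pi/2)"
  obtains \<epsilon> where "0 < \<epsilon>" "\<epsilon> < pi/2" "b < (real N - 1) * (pi/2 - \<epsilon>)"
proof -
  have "((\<lambda>\<epsilon>. (real N - 1) * (pi/2 - \<epsilon>)) \<longlongrightarrow> (real N - 1) * (pi/2 - 0)) (at_right 0)"
    by (intro tendsto_intros)
  then have "eventually (\<lambda>\<epsilon>. b < (real N - 1) * (pi/2 - \<epsilon>)) (at_right 0)"
    using assms by (intro order_tendstoD(1)) auto
  moreover have "eventually (\<lambda>\<epsilon>. \<epsilon> < pi/2) (at_right (0::real))"
    by (intro order_tendstoD(2)[OF tendsto_ident_at]) simp
  ultimately have "eventually (\<lambda>\<epsilon>. 0 < \<epsilon> \<and> \<epsilon> < pi/2 \<and> b < (real N - 1) * (pi/2 - \<epsilon>)) (at_right (0::real))"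
    using eventually_at_right_less[of 0] by eventually_elim auto
  then show ?thesis
    using that eventually_happens[of _ "at_right (0::real)"] by auto
qed

lemma le_Liminf_if_eventually_gt:
  assumes "\<And>b. b < B \<Longrightarrow> eventually (\<lambda>t. ereal b < f t) F"
  shows "ereal B \<le> Liminf F f"
  unfolding le_Liminf_iff
proof (intro allI impI)
  fix y assume "y < ereal B"
  then obtain b where "y < ereal b" "b < B"
    using ereal_dense2 by force
  then show "eventually (\<lambda>t. y < f t) F"
    using assms[of b] by (auto elim: eventually_mono)
qed

lemma eventually_total_curvature_ge:
  assumes r: "r \<ge> 2" and S: "{0..2} \<subseteq> S" and \<epsilon>: "0 < \<epsilon>" "\<epsilon> < pi/2"
    and C: "q \<le> pd_dim r" "idx_z r < q" "idx_z' r < q" "\<And>t l i. i < q \<Longrightarrow> C t l i = pd_path r t l i"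
  shows "eventually (\<lambda>t. ereal ((real (grid_len r) - 1) * (pi/2 - \<epsilon>)) \<le> total_curvature q (C t) S) at_top"
proof -
  define K where "K = 2 * (path_const r)^2"
  have K: "K > 0"
    using path_const_ge(3)[of r] unfolding K_def by simp
  have q: "real q > 0"
    using C by auto
  have "sin \<epsilon> > 0"
    using \<epsilon> by (intro sin_gt_zero) auto
  then have c: "min (1 / K) (sin \<epsilon> / (real q * K)) > 0"
    using K q by simp
  show ?thesis
    using eventually_large_parameter[OF r c]
  proof (rule eventually_mono)
    fix t assume t: "2 \<le> t \<and> 2 * real (p_dim r) * t powr (2 - (1/2) ^ (r + 1)) \<le> t^2 \<and>
        t powr (- dominance_gap r) \<le> min (1 / K) (sin \<epsilon> / (real q * K))"
    then have "t powr (- dominance_gap r) * K \<le> 1"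
      "t powr (- dominance_gap r) * (real q * K) \<le> sin \<epsilon>"
      using K q by (simp_all add: le_divide_eq)
    then have "K * t powr (- dominance_gap r) \<le> 1" "real q * (K * t powr (- dominance_gap r)) \<le> sin \<epsilon>"
      by (simp_all add: mult_ac)
    then have "ereal ((real (grid_len r) - 1) * (pi/2 - \<epsilon>))
        \<le> ereal (poly_curv q (\<lambda>k. C t (grid r k)) (grid_len r))"
      unfolding ereal_less_eq(3) using C t \<epsilon> unfolding K_def
      by (intro inscribed_polygon_curvature[OF r]) auto
    also have "\<dots> \<le> total_curvature q (C t) S"
      using grid_inscribed[OF r] S by (intro total_curvature_ge_polygon) auto
    finally show "ereal ((real (grid_len r) - 1) * (pi/2 - \<epsilon>)) \<le> total_curvature q (C t) S" .
  qed
qed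

lemma total_curvature_liminf:
  assumes r: "r \<ge> 1" and S: "{0..2} \<subseteq> S"
    and C: "r \<ge> 2 \<Longrightarrow> q \<le> pd_dim r \<and> idx_z r < q \<and> idx_z' r < q \<and>
                          (\<forall>t l i. i < q \<longrightarrow> C t l i = pd_path r t l i)"
  shows "ereal ((2 ^ (r - 1) - 1) * pi / 2) \<le> Liminf at_top (\<lambda>t. total_curvature q (C t) S)"
proof (cases "r = 1")
  case True
  have "0 \<in> S"
    using S by auto
  then have "\<forall>t. 0 \<le> total_curvature q (C t) S"
    using total_curvature_nonneg by blast
  then have "0 \<le> Liminf at_top (\<lambda>t. total_curvature q (C t) S)"
    by (intro Liminf_bounded) auto
  then show ?thesis
    using True by (simp add: zero_ereal_def)
next
  case False
  with r have r: "r \<ge> 2" by simp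
  show ?thesis
  proof (rule le_Liminf_if_eventually_gt)
    fix b assume "b < (2 ^ (r - 1) - 1) * pi / 2"
    then have "b < (real (grid_len r) - 1) * (pi/2)"
      by (simp add: grid_len_def)
    then obtain \<epsilon> where \<epsilon>: "0 < \<epsilon>" "\<epsilon> < pi/2" "b < (real (grid_len r) - 1) * (pi/2 - \<epsilon>)"
      by (rule angle_defect_exists)
    have "eventually (\<lambda>t. ereal ((real (grid_len r) - 1) * (pi/2 - \<epsilon>)) \<le> total_curvature q (C t) S) at_top"
      using C[OF r] by (intro eventually_total_curvature_ge[OF r S \<epsilon>(1,2)]) auto
    then show "eventually (\<lambda>t. ereal b < total_curvature q (C t) S) at_top"
    proof (rule eventually_mono)
      fix t
      assume "ereal ((real (grid_len r) - 1) * (pi/2 - \<epsilon>)) \<le> total_curvature q (C t) S"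
      moreover have "ereal b < ereal ((real (grid_len r) - 1) * (pi/2 - \<epsilon>))"
        using \<epsilon>(3) by simp
      ultimately show "ereal b < total_curvature q (C t) S"
        by (rule order.strict_trans2[rotated])
    qed
  qed
qed

theorem mainTheorem18:
  fixes r :: nat
  assumes "r \<ge> 1"
  shows "Liminf at_top (\<lambda>t. total_curvature (pd_dim r) (pd_path r t) {0..2})
           \<ge> ereal ((2 ^ (r - 1) - 1) * pi / 2)
       \<and> Liminf at_top (\<lambda>t. total_curvature (p_dim r) (p_path r t) {0..2})
           \<ge> ereal ((2 ^ (r - 1) - 1) * pi / 2)
       \<and> Liminf at_top (\<lambda>t. total_curvature (pd_dim r) (pd_path r t) UNIV)
           \<ge> ereal ((2 ^ (r - 1) - 1) * pi / 2)
       \<and> Liminf at_top (\<lambda>t. total_curvature (p_dim r) (p_path r t) UNIV)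
           \<ge> ereal ((2 ^ (r - 1) - 1) * pi / 2)"
proof -
  have "idx_z r < p_dim r" "idx_z' r < p_dim r" "p_dim r \<le> pd_dim r"
    by (simp_all add: idx_z_bounds p_dim_le_pd_dim)
  then have primal_dual: "r \<ge> 2 \<Longrightarrow> pd_dim r \<le> pd_dim r \<and> idx_z r < pd_dim r \<and> idx_z' r < pd_dim r \<and>
                   (\<forall>t l i. i < pd_dim r \<longrightarrow> pd_path r t l i = pd_path r t l i)"
    and primal: "r \<ge> 2 \<Longrightarrow> p_dim r \<le> pd_dim r \<and> idx_z r < p_dim r \<and> idx_z' r < p_dim r \<and>
                   (\<forall>t l i. i < p_dim r \<longrightarrow> p_path r t l i = pd_path r t l i)"
    using p_path_eq_pd_path by auto
  show ?thesis
    using total_curvature_liminf[OF assms _ primal_dual] total_curvature_liminf[OF assms _ primal]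
    by auto
qed

end
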